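(* Let the revision protocols $\rho^c$ be arbitrary (Lipschitz) and let $\mathcal M_{\mathcal F}\subseteq\mathrm{NE}(\mathcal F)$ be nonempty and closed, with $\mathcal M=\{B_{S\to K}x:x\in\mathcal M_{\mathcal F}\}$. Assume: (i) for every $\mu\in\mathrm{MSNE}(F,\phi)$ and every $c\in[C]$, $f^{c,r}(\mu)=0$; (ii) there is a set $\bar D_x\subseteq D_x$ containing a relative neighborhood of $\mathcal M_{\mathcal F}$ in $D_x$ and a continuously differentiable $V:\bar D_x\to\mathbb R_{\ge0}$ with $V(x)>0$ on $\bar D_x\setminus\mathcal M_{\mathcal F}$, $V=0$ on $\mathcal M_{\mathcal F}$, and constants $\gamma_1,\gamma_2>0$ such that for all $x\in\bar D_x$: $\nabla V(x)^\top g(x)\le-\gamma_1d_{\mathcal M_{\mathcal F}}(x)^2$ and $\|\nabla V(x)\|\le\gamma_2d_{\mathcal M_{\mathcal F}}(x)$, where $g$ is the reduced vector field (R). Then there is $\epsilon^\star>0$ such that for all $\epsilon\in(0,\epsilon^\star)$ the set $\mathcal M$ is locally asymptotically stable under the evolutionary dynamics (E) with rates $R^c_d=\kappa^c/\epsilon$. If moreover $\bar D_x=D_x$, then $\mathcal M$ is globally asymptotically stable (on $X$).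
   Context: Setting. There are $C$ classes of players, $[C]=\{1,\dots,C\}$. For each class $c\in[C]$: $\mathcal S^c$ is a finite state set with $p^c$ elements; for each $s\in\mathcal S^c$, $\mathcal A^c(s)$ is a nonempty finite action set; $\phi^c(\cdot\mid s,a)$ is a probability distribution on $\mathcal S^c$ for each $s\in\mathcal S^c$, $a\in\mathcal A^c(s)$; $\mathcal U^c_D$ is a finite set of $n^c$ deterministic stationary policies, each $u\in\mathcal U^c_D$ assigning to every $s$ a point mass $u(\cdot\mid s)$ on some action of $\mathcal A^c(s)$; $m^c>0$ is the mass of class $c$; $R^c_d>0$ is the state-transition rate. Let $n=\sum_c n^c$. For $u\in\mathcal U^c_D$ put $\phi^{c,u}(s\mid s')=\sum_{a'\in\mathcal A^c(s')}\phi^c(s\mid s',a')u(a'\mid s')$; standing assumption: the Markov chain on $\mathcal S^c$ with kernel $\phi^{c,u}$ has a unique recurrent communicating class, hence a unique stationary distribution $\eta^{c,u}$. The population state is $\mu=(\mu^c)_{c\in[C]}\in X:=\prod_c X^c$, where $X^c=\{\mu^c\in\mathbb R_{\ge0}^{\mathcal S^c\times\mathcal U^c_D}:\sum_{s,u}\mu^c[s,u]=m^c\}$; write $\mu^c[\mathcal S^c,u]:=\sum_{s\in\mathcal S^c}\mu^c[s,u]$ and $\mu^c[\mathcal S^c,\cdot]\in\mathbb R^{n^c}_{\ge0}$ for the vector of these. A payoff map $F=(F^c)_{c\in[C]}$ is given, with $F^c$ continuously differentiable on an open neighborhood of $X$ and valued in $\mathbb R^{\mathcal U^c_D}$ ($F^c_u(\mu)$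 is the payoff of policy $u$ for class $c$). Each class has a revision protocol $\rho^c=(\rho^c_{uv})_{u,v\in\mathcal U^c_D}$, a Lipschitz continuous map $\mathbb R^{n^c}\times\mathbb R^{n^c}_{\ge0}\to\mathbb R^{n^c\times n^c}_{\ge0}$ whose first argument is a payoff vector and second a policy distribution. The evolutionary dynamics (E) are the ODE on $X$: for all $c\in[C]$, $s\in\mathcal S^c$, $u\in\mathcal U^c_D$, $\dot\mu^c[s,u]=f^{c,d}_{s,u}(\mu)+f^{c,r}_{s,u}(\mu)$, where $f^{c,d}_{s,u}(\mu)=R^c_d\sum_{s'\in\mathcal S^c}\sum_{a'\in\mathcal A^c(s')}\phi^c(s\mid s',a')u(a'\mid s')\mu^c[s',u]-R^c_d\mu^c[s,u]$ and $f^{c,r}_{s,u}(\mu)=\sum_{u'\in\mathcal U^c_D}\mu^c[s,u']\rho^c_{u'u}(F^c(\mu),\mu^c[\mathcal S^c,\cdot])-\mu^c[s,u]\sum_{u'\in\mathcal U^c_D}\rho^c_{uu'}(F^c(\mu),\mu^c[\mathcal S^c,\cdot])$. Solutions from $X$ exist, are unique and remain in $X$. A state $\mu\in X$ is a mixed stationary Nash equilibrium (MSNE) if for every $c\in[C]$: (a) for all $u\in\mathcal U^c_D$, $\mu^c[\mathcal S^c,u]>0\Rightarrow F^c_u(\mu)\ge F^c_v(\mu)$ for all $v\in\mathcal U^c_D$; and (b) $f^{c,d}_{s,u}(\mu)=0$ for all $s\in\mathcal S^c,u\in\mathcal U^c_D$. $\mathrm{MSNE}(F,\phi)$ denotes the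 set of MSNE. Two-time-scale setup. Let $B^c_{S\to K}=[e^1\otimes\eta^{c,u_1}\ \cdots\ e^{n^c}\otimes\eta^{c,u_{n^c}}]\in\mathbb R^{p^cn^c\times n^c}$ (coordinates of $\mu^c$ ordered $(s_1,u_1),\dots,(s_{p^c},u_1),\dots,(s_{p^c},u_{n^c})$; $e^i$ the standard basis of $\mathbb R^{n^c}$), and $B_{S\to K}=\mathrm{diag}_c(B^c_{S\to K})$; thus $(B_{S\to K}x)^c[s,u]=x^c_u\eta^{c,u}(s)$. Let $D_x=\prod_c\{x^c\in\mathbb R^{n^c}_{\ge0}:\mathbf 1^\top x^c=m^c\}$. The steady-state game is $\mathcal F(x):=F(B_{S\to K}x)$ (defined on a neighborhood of $D_x$); $\mathrm{NE}(\mathcal F)$ is the set of $x\in D_x$ with $x^c_u>0\Rightarrow\mathcal F^c_u(x)\ge\mathcal F^c_v(x)$ for all $c,u,v$. One has $\mathrm{MSNE}(F,\phi)=\{B_{S\to K}x:x\in\mathrm{NE}(\mathcal F)\}$ and $\mu^c[\mathcal S^c,u]=x^c_u$ for $\mu=B_{S\to K}x$. For a closed $\mathcal M_{\mathcal F}\subseteq D_x$ put $\mathcal M=\{B_{S\to K}x:x\in\mathcal M_{\mathcal F}\}$. The reduced vector field (R) on $D_x$ is $g^c_u(x)=\sum_{u'}x^c_{u'}\rho^c_{u'u}(\mathcal F^c(x),x^c)-x^c_u\sum_{u'}\rho^c_{uu'}(\mathcal F^c(x),x^c)$. Time-scale parametrization: fix constants $\kappa^c\ge1$ with $\min_c\kappa^c=1$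 and set $R^c_d=\kappa^c/\epsilon$ for $\epsilon>0$ (so $\epsilon=1/\min_cR^c_d$). $d_A(y)=\inf_{a\in A}\|y-a\|$. *)

theory Defs
  imports "HOL-Analysis.Analysis"
begin

text \<open>Classes are the elements of a finite type 'c (so [C] = UNIV).
  All state sets S c are subsets of a finite type 's, all action sets A c s
  subsets of a finite type 'a; a deterministic stationary policy is a map
  u :: 's => 'a (point mass on u s at state s).
  A population state mu is a vector in real^('c * 's * ('s => 'a)); its
  coordinate (c,s,u) is mu^c[s,u].  Coordinates with s not in S c or u not in
  U c are forced to be 0 on X.  Likewise a policy distribution x lives in
  real^('c * ('s => 'a)), coordinate (c,u) being x^c_u.
  phi c s a s' is the probability phi^c(s' | s, a).\<close>

type_synonym ('c,'s,'a) pstate = "real^('c \<times> 's \<times> ('s \<Rightarrow> 'a))"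
type_synonym ('c,'s,'a) pdist = "real^('c \<times> ('s \<Rightarrow> 'a))"

definition C1_on :: "'x::real_normed_vector set \<Rightarrow> ('x \<Rightarrow> 'y::real_normed_vector) \<Rightarrow> bool" where
  "C1_on G f \<longleftrightarrow> (\<exists>f'. (\<forall>x\<in>G. (f has_derivative blinfun_apply (f' x)) (at x)) \<and> continuous_on G f')"

definition kern :: "('c::finite \<Rightarrow> 's::finite \<Rightarrow> 'a::finite \<Rightarrow> 's \<Rightarrow> real) \<Rightarrow> 'c \<Rightarrow> ('s \<Rightarrow> 'a) \<Rightarrow> 's \<Rightarrow> 's \<Rightarrow> real" where
  "kern phi c u s s' = phi c s (u s) s'"

definition reach :: "'s::finite set \<Rightarrow> ('s \<Rightarrow> 's \<Rightarrow> real) \<Rightarrow> 's \<Rightarrow> 's \<Rightarrow> bool" where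
  "reach S P s t \<longleftrightarrow> (s, t) \<in> {(x, y). x \<in> S \<and> y \<in> S \<and> P x y > 0}\<^sup>*"

definition recurrent :: "'s::finite set \<Rightarrow> ('s \<Rightarrow> 's \<Rightarrow> real) \<Rightarrow> 's \<Rightarrow> bool" where
  "recurrent S P s \<longleftrightarrow> s \<in> S \<and> (\<forall>t\<in>S. reach S P s t \<longrightarrow> reach S P t s)"

text \<open>The chain has a unique recurrent communicating class (in a finite chain
  recurrent states always exist; uniqueness means they all communicate).\<close>
definition unique_recurrent_class :: "'s::finite set \<Rightarrow> ('s \<Rightarrow> 's \<Rightarrow> real) \<Rightarrow> bool" where
  "unique_recurrent_class S P \<longleftrightarrow>
     (\<forall>s\<in>S. \<forall>t\<in>S. recurrent S P s \<and> recurrent S P t \<longrightarrow> reach S P s t)"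

definition stationary_dist :: "'s::finite set \<Rightarrow> ('s \<Rightarrow> 's \<Rightarrow> real) \<Rightarrow> ('s \<Rightarrow> real) \<Rightarrow> bool" where
  "stationary_dist S P eta \<longleftrightarrow>
     (\<forall>s. s \<notin> S \<longrightarrow> eta s = 0) \<and> (\<forall>s\<in>S. eta s \<ge> 0) \<and> (\<Sum>s\<in>S. eta s) = 1 \<and>
     (\<forall>s\<in>S. (\<Sum>s'\<in>S. eta s' * P s' s) = eta s)"

definition eta :: "('c::finite \<Rightarrow> 's::finite set) \<Rightarrow> ('c \<Rightarrow> 's \<Rightarrow> 'a::finite \<Rightarrow> 's \<Rightarrow> real) \<Rightarrow> 'c \<Rightarrow> ('s \<Rightarrow> 'a) \<Rightarrow> 's \<Rightarrow> real" where
  "eta S phi c u = (THE e. stationary_dist (S c) (kern phi c u) e)"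

definition popX :: "('c::finite \<Rightarrow> 's::finite set) \<Rightarrow> ('c \<Rightarrow> ('s \<Rightarrow> 'a::finite) set) \<Rightarrow> ('c \<Rightarrow> real) \<Rightarrow> ('c,'s,'a) pstate set" where
  "popX S U m = {\<mu>. (\<forall>c s u. \<mu> $ (c, s, u) \<ge> 0) \<and>
                    (\<forall>c s u. \<not> (s \<in> S c \<and> u \<in> U c) \<longrightarrow> \<mu> $ (c, s, u) = 0) \<and>
                    (\<forall>c. (\<Sum>s\<in>S c. \<Sum>u\<in>U c. \<mu> $ (c, s, u)) = m c)}"

definition pol_mass :: "('c::finite \<Rightarrow> 's::finite set) \<Rightarrow> ('c,'s,'a::finite) pstate \<Rightarrow> 'c \<Rightarrow> ('s \<Rightarrow> 'a) \<Rightarrow> real" where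
  "pol_mass S \<mu> c u = (\<Sum>s\<in>S c. \<mu> $ (c, s, u))"

definition pol_vec :: "('c::finite \<Rightarrow> 's::finite set) \<Rightarrow> ('c \<Rightarrow> ('s \<Rightarrow> 'a::finite) set) \<Rightarrow> ('c,'s,'a) pstate \<Rightarrow> 'c \<Rightarrow> real^('s \<Rightarrow> 'a)" where
  "pol_vec S U \<mu> c = (\<chi> u. if u \<in> U c then pol_mass S \<mu> c u else 0)"

definition pay_vec :: "('c::finite \<Rightarrow> ('s::finite \<Rightarrow> 'a::finite) set) \<Rightarrow> ('c \<Rightarrow> ('c,'s,'a) pstate \<Rightarrow> ('s \<Rightarrow> 'a) \<Rightarrow> real)
     \<Rightarrow> ('c,'s,'a) pstate \<Rightarrow> 'c \<Rightarrow> real^('s \<Rightarrow> 'a)" where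
  "pay_vec U F \<mu> c = (\<chi> u. if u \<in> U c then F c \<mu> u else 0)"

text \<open>f^{c,d}_{s,u}(mu); the sum over actions collapses because u(.|s') is the
  point mass at u s'.\<close>
definition fd :: "('c::finite \<Rightarrow> 's::finite set) \<Rightarrow> ('c \<Rightarrow> 's \<Rightarrow> 'a::finite \<Rightarrow> 's \<Rightarrow> real) \<Rightarrow> ('c \<Rightarrow> real)
     \<Rightarrow> ('c,'s,'a) pstate \<Rightarrow> 'c \<Rightarrow> 's \<Rightarrow> ('s \<Rightarrow> 'a) \<Rightarrow> real" where
  "fd S phi R \<mu> c s u =
     R c * (\<Sum>s'\<in>S c. phi c s' (u s') s * \<mu> $ (c, s', u)) - R c * \<mu> $ (c, s, u)"

text \<open>Revision protocol: rho c p q u v = rho^c_{uv}(p, q).\<close>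
definition fr :: "('c::finite \<Rightarrow> 's::finite set) \<Rightarrow> ('c \<Rightarrow> ('s \<Rightarrow> 'a::finite) set)
     \<Rightarrow> ('c \<Rightarrow> ('c,'s,'a) pstate \<Rightarrow> ('s \<Rightarrow> 'a) \<Rightarrow> real)
     \<Rightarrow> ('c \<Rightarrow> real^('s \<Rightarrow> 'a) \<Rightarrow> real^('s \<Rightarrow> 'a) \<Rightarrow> ('s \<Rightarrow> 'a) \<Rightarrow> ('s \<Rightarrow> 'a) \<Rightarrow> real)
     \<Rightarrow> ('c,'s,'a) pstate \<Rightarrow> 'c \<Rightarrow> 's \<Rightarrow> ('s \<Rightarrow> 'a) \<Rightarrow> real" where
  "fr S U F rho \<mu> c s u =
     (\<Sum>u'\<in>U c. \<mu> $ (c, s, u') * rho c (pay_vec U F \<mu> c) (pol_vec S U \<mu> c) u' u)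
     - \<mu> $ (c, s, u) * (\<Sum>u'\<in>U c. rho c (pay_vec U F \<mu> c) (pol_vec S U \<mu> c) u u')"

definition Efield :: "('c::finite \<Rightarrow> 's::finite set) \<Rightarrow> ('c \<Rightarrow> ('s \<Rightarrow> 'a::finite) set) \<Rightarrow> ('c \<Rightarrow> 's \<Rightarrow> 'a \<Rightarrow> 's \<Rightarrow> real)
     \<Rightarrow> ('c \<Rightarrow> real) \<Rightarrow> ('c \<Rightarrow> ('c,'s,'a) pstate \<Rightarrow> ('s \<Rightarrow> 'a) \<Rightarrow> real)
     \<Rightarrow> ('c \<Rightarrow> real^('s \<Rightarrow> 'a) \<Rightarrow> real^('s \<Rightarrow> 'a) \<Rightarrow> ('s \<Rightarrow> 'a) \<Rightarrow> ('s \<Rightarrow> 'a) \<Rightarrow> real)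
     \<Rightarrow> ('c,'s,'a) pstate \<Rightarrow> ('c,'s,'a) pstate" where
  "Efield S U phi R F rho \<mu> =
     (\<chi> i. case i of (c, s, u) \<Rightarrow>
        if s \<in> S c \<and> u \<in> U c then fd S phi R \<mu> c s u + fr S U F rho \<mu> c s u else 0)"

definition E_solution :: "('c::finite \<Rightarrow> 's::finite set) \<Rightarrow> ('c \<Rightarrow> ('s \<Rightarrow> 'a::finite) set) \<Rightarrow> ('c \<Rightarrow> real)
     \<Rightarrow> ('c \<Rightarrow> 's \<Rightarrow> 'a \<Rightarrow> 's \<Rightarrow> real)
     \<Rightarrow> ('c \<Rightarrow> real) \<Rightarrow> ('c \<Rightarrow> ('c,'s,'a) pstate \<Rightarrow> ('s \<Rightarrow> 'a) \<Rightarrow> real)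
     \<Rightarrow> ('c \<Rightarrow> real^('s \<Rightarrow> 'a) \<Rightarrow> real^('s \<Rightarrow> 'a) \<Rightarrow> ('s \<Rightarrow> 'a) \<Rightarrow> ('s \<Rightarrow> 'a) \<Rightarrow> real)
     \<Rightarrow> ('c,'s,'a) pstate \<Rightarrow> (real \<Rightarrow> ('c,'s,'a) pstate) \<Rightarrow> bool" where
  "E_solution S U m phi R F rho \<mu>0 traj \<longleftrightarrow>
     traj 0 = \<mu>0 \<and> (\<forall>t\<ge>0. traj t \<in> popX S U m) \<and>
     (\<forall>t\<ge>0. (traj has_vector_derivative Efield S U phi R F rho (traj t)) (at t within {0..}))"

text \<open>Condition (b) is f^{c,d}(mu) = 0, which does not depend on the rate
  R^c_d > 0; we evaluate it with rate 1.\<close>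
definition MSNE :: "('c::finite \<Rightarrow> 's::finite set) \<Rightarrow> ('c \<Rightarrow> ('s \<Rightarrow> 'a::finite) set) \<Rightarrow> ('c \<Rightarrow> real)
     \<Rightarrow> ('c \<Rightarrow> 's \<Rightarrow> 'a \<Rightarrow> 's \<Rightarrow> real)
     \<Rightarrow> ('c \<Rightarrow> ('c,'s,'a) pstate \<Rightarrow> ('s \<Rightarrow> 'a) \<Rightarrow> real) \<Rightarrow> ('c,'s,'a) pstate set" where
  "MSNE S U m phi F = {\<mu> \<in> popX S U m. \<forall>c.
      (\<forall>u\<in>U c. pol_mass S \<mu> c u > 0 \<longrightarrow> (\<forall>v\<in>U c. F c \<mu> u \<ge> F c \<mu> v)) \<and>
      (\<forall>s\<in>S c. \<forall>u\<in>U c. fd S phi (\<lambda>_. 1) \<mu> c s u = 0)}"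

definition Dx :: "('c::finite \<Rightarrow> ('s::finite \<Rightarrow> 'a::finite) set) \<Rightarrow> ('c \<Rightarrow> real) \<Rightarrow> ('c,'s,'a) pdist set" where
  "Dx U m = {x. (\<forall>i. x $ i \<ge> 0) \<and> (\<forall>c u. u \<notin> U c \<longrightarrow> x $ (c, u) = 0) \<and>
                (\<forall>c. (\<Sum>u\<in>U c. x $ (c, u)) = m c)}"

definition BSK :: "('c::finite \<Rightarrow> 's::finite set) \<Rightarrow> ('c \<Rightarrow> ('s \<Rightarrow> 'a::finite) set) \<Rightarrow> ('c \<Rightarrow> 's \<Rightarrow> 'a \<Rightarrow> 's \<Rightarrow> real)
     \<Rightarrow> ('c,'s,'a) pdist \<Rightarrow> ('c,'s,'a) pstate" where
  "BSK S U phi x = (\<chi> i. case i of (c, s, u) \<Rightarrow>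
      if s \<in> S c \<and> u \<in> U c then x $ (c, u) * eta S phi c u s else 0)"

definition ssgame :: "('c::finite \<Rightarrow> 's::finite set) \<Rightarrow> ('c \<Rightarrow> ('s \<Rightarrow> 'a::finite) set) \<Rightarrow> ('c \<Rightarrow> 's \<Rightarrow> 'a \<Rightarrow> 's \<Rightarrow> real)
     \<Rightarrow> ('c \<Rightarrow> ('c,'s,'a) pstate \<Rightarrow> ('s \<Rightarrow> 'a) \<Rightarrow> real)
     \<Rightarrow> 'c \<Rightarrow> ('c,'s,'a) pdist \<Rightarrow> ('s \<Rightarrow> 'a) \<Rightarrow> real" where
  "ssgame S U phi F c x u = F c (BSK S U phi x) u"

definition NE_ss :: "('c::finite \<Rightarrow> 's::finite set) \<Rightarrow> ('c \<Rightarrow> ('s \<Rightarrow> 'a::finite) set) \<Rightarrow> ('c \<Rightarrow> real)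
     \<Rightarrow> ('c \<Rightarrow> 's \<Rightarrow> 'a \<Rightarrow> 's \<Rightarrow> real)
     \<Rightarrow> ('c \<Rightarrow> ('c,'s,'a) pstate \<Rightarrow> ('s \<Rightarrow> 'a) \<Rightarrow> real) \<Rightarrow> ('c,'s,'a) pdist set" where
  "NE_ss S U m phi F = {x \<in> Dx U m. \<forall>c. \<forall>u\<in>U c. x $ (c, u) > 0 \<longrightarrow>
      (\<forall>v\<in>U c. ssgame S U phi F c x u \<ge> ssgame S U phi F c x v)}"

definition gred :: "('c::finite \<Rightarrow> 's::finite set) \<Rightarrow> ('c \<Rightarrow> ('s \<Rightarrow> 'a::finite) set) \<Rightarrow> ('c \<Rightarrow> 's \<Rightarrow> 'a \<Rightarrow> 's \<Rightarrow> real)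
     \<Rightarrow> ('c \<Rightarrow> ('c,'s,'a) pstate \<Rightarrow> ('s \<Rightarrow> 'a) \<Rightarrow> real)
     \<Rightarrow> ('c \<Rightarrow> real^('s \<Rightarrow> 'a) \<Rightarrow> real^('s \<Rightarrow> 'a) \<Rightarrow> ('s \<Rightarrow> 'a) \<Rightarrow> ('s \<Rightarrow> 'a) \<Rightarrow> real)
     \<Rightarrow> ('c,'s,'a) pdist \<Rightarrow> ('c,'s,'a) pdist" where
  "gred S U phi F rho x = (\<chi> i. case i of (c, u) \<Rightarrow>
      if u \<in> U c then
        (let p = (\<chi> v. if v \<in> U c then ssgame S U phi F c x v else 0);
             q = (\<chi> v. if v \<in> U c then x $ (c, v) else 0)
         in (\<Sum>u'\<in>U c. x $ (c, u') * rho c p q u' u) - x $ (c, u) * (\<Sum>u'\<in>U c. rho c p q u u'))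
      else 0)"

definition E_LAS :: "('c::finite \<Rightarrow> 's::finite set) \<Rightarrow> ('c \<Rightarrow> ('s \<Rightarrow> 'a::finite) set) \<Rightarrow> ('c \<Rightarrow> real)
     \<Rightarrow> ('c \<Rightarrow> 's \<Rightarrow> 'a \<Rightarrow> 's \<Rightarrow> real)
     \<Rightarrow> ('c \<Rightarrow> real) \<Rightarrow> ('c \<Rightarrow> ('c,'s,'a) pstate \<Rightarrow> ('s \<Rightarrow> 'a) \<Rightarrow> real)
     \<Rightarrow> ('c \<Rightarrow> real^('s \<Rightarrow> 'a) \<Rightarrow> real^('s \<Rightarrow> 'a) \<Rightarrow> ('s \<Rightarrow> 'a) \<Rightarrow> ('s \<Rightarrow> 'a) \<Rightarrow> real)
     \<Rightarrow> ('c,'s,'a) pstate set \<Rightarrow> bool" where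
  "E_LAS S U m phi R F rho M \<longleftrightarrow>
     (\<forall>e>0. \<exists>d>0. \<forall>\<mu>0\<in>popX S U m. \<forall>traj.
        infdist \<mu>0 M < d \<and> E_solution S U m phi R F rho \<mu>0 traj \<longrightarrow>
        (\<forall>t\<ge>0. infdist (traj t) M < e)) \<and>
     (\<exists>d>0. \<forall>\<mu>0\<in>popX S U m. \<forall>traj.
        infdist \<mu>0 M < d \<and> E_solution S U m phi R F rho \<mu>0 traj \<longrightarrow>
        ((\<lambda>t. infdist (traj t) M) \<longlongrightarrow> 0) at_top)"

definition E_GAS :: "('c::finite \<Rightarrow> 's::finite set) \<Rightarrow> ('c \<Rightarrow> ('s \<Rightarrow> 'a::finite) set) \<Rightarrow> ('c \<Rightarrow> real)
     \<Rightarrow> ('c \<Rightarrow> 's \<Rightarrow> 'a \<Rightarrow> 's \<Rightarrow> real)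
     \<Rightarrow> ('c \<Rightarrow> real) \<Rightarrow> ('c \<Rightarrow> ('c,'s,'a) pstate \<Rightarrow> ('s \<Rightarrow> 'a) \<Rightarrow> real)
     \<Rightarrow> ('c \<Rightarrow> real^('s \<Rightarrow> 'a) \<Rightarrow> real^('s \<Rightarrow> 'a) \<Rightarrow> ('s \<Rightarrow> 'a) \<Rightarrow> ('s \<Rightarrow> 'a) \<Rightarrow> real)
     \<Rightarrow> ('c,'s,'a) pstate set \<Rightarrow> bool" where
  "E_GAS S U m phi R F rho M \<longleftrightarrow>
     (\<forall>e>0. \<exists>d>0. \<forall>\<mu>0\<in>popX S U m. \<forall>traj.
        infdist \<mu>0 M < d \<and> E_solution S U m phi R F rho \<mu>0 traj \<longrightarrow>
        (\<forall>t\<ge>0. infdist (traj t) M < e)) \<and>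
     (\<forall>\<mu>0\<in>popX S U m. \<forall>traj.
        E_solution S U m phi R F rho \<mu>0 traj \<longrightarrow>
        ((\<lambda>t. infdist (traj t) M) \<longlongrightarrow> 0) at_top)"

end

theory Submission
  imports Defs
begin

text \<open>Write a population state as \<mu> = B x + z, where x is its policy marginal and z the
  deviation of each policy's state distribution from the stationary one. The marginal
  follows the reduced field (R) up to an error of order |z|, while z relaxes at rate
  R_d under the lazy transition kernels, forced only by the revision field, which is
  Lipschitz and vanishes on the equilibria by (i). A quadratic energy of z built from a
  Doeblin contraction of the lazy kernels, added to V(x), is a Lyapunov function that
  decays exponentially near the equilibria once all rates exceed a threshold, that is for
  small \<epsilon>. Trapping in a sublevel set, together with V being bounded away from 0 off a
  neighbourhood of MF, turns this decay into local, and for Dbar = Dx global, asymptotic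
  stability.\<close>

lemma sum_power2_le_power2_sum_abs:
  fixes w :: "'s \<Rightarrow> real"
  shows "(\<Sum>s\<in>S. (w s)\<^sup>2) \<le> (\<Sum>s\<in>S. \<bar>w s\<bar>)\<^sup>2"
proof (cases "finite S")
  case True
  have "(\<Sum>s\<in>S. (w s)\<^sup>2) = (L2_set w S)\<^sup>2"
    using True by (simp add: L2_set_def sum_nonneg)
  also have "\<dots> \<le> (\<Sum>s\<in>S. \<bar>w s\<bar>)\<^sup>2"
    by (intro power_mono L2_set_le_sum_abs L2_set_nonneg)
  finally show ?thesis .
qed simp

lemma two_mult_le_weighted_squares:
  fixes a b \<eta> :: real
  assumes "\<eta> > 0"
  shows "2 * a * b \<le> \<eta> * a\<^sup>2 + b\<^sup>2 / \<eta>"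
proof -
  have "0 \<le> (\<eta> * a - b)\<^sup>2 / \<eta>" using assms by simp
  also have "(\<eta> * a - b)\<^sup>2 / \<eta> = \<eta> * a\<^sup>2 - 2 * a * b + b\<^sup>2 / \<eta>"
    using assms by (simp add: power2_eq_square field_simps)
  finally show ?thesis by simp
qed

lemma bounded_if_components_bounded:
  fixes X :: "(real^'n) set"
  assumes "\<And>v i. v \<in> X \<Longrightarrow> \<bar>v $ i\<bar> \<le> c"
  shows "bounded X"
proof -
  have "norm v \<le> real CARD('n) * c" if "v \<in> X" for v
    using norm_le_l1_cart[of v] sum_mono[of UNIV "\<lambda>i. \<bar>v $ i\<bar>" "\<lambda>_. c"] assms[OF that] by simp
  then show ?thesis by (auto simp: bounded_iff)
qed

lemma lipschitz_on_sum:
  fixes f :: "'i \<Rightarrow> 'a::metric_space \<Rightarrow> 'b::real_normed_vector"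
  assumes "finite I" and "\<And>i. i \<in> I \<Longrightarrow> (L i)-lipschitz_on X (f i)"
  shows "(\<Sum>i\<in>I. L i)-lipschitz_on X (\<lambda>x. \<Sum>i\<in>I. f i x)"
  using assms by (induction I rule: finite_induct) (auto intro: lipschitz_on_add lipschitz_on_constant)

lemma lipschitz_on_uniform_finite:
  assumes "finite I" and "\<And>i. i \<in> I \<Longrightarrow> \<exists>L. L-lipschitz_on X (f i)"
  shows "\<exists>L. \<forall>i\<in>I. L-lipschitz_on X (f i)"
proof -
  obtain L where L: "\<And>i. i \<in> I \<Longrightarrow> (L i)-lipschitz_on X (f i)" using assms(2) by metis
  have "(\<Sum>j\<in>I. L j)-lipschitz_on X (f i)" if "i \<in> I" for i
    using L that assms(1) lipschitz_on_nonneg[OF L]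
    by (intro lipschitz_on_le[OF L[OF that]] member_le_sum) auto
  then show ?thesis by blast
qed

lemma lipschitz_on_sum_ex:
  fixes f :: "'i \<Rightarrow> 'a::metric_space \<Rightarrow> 'b::real_normed_vector"
  assumes "finite I" and "\<And>i. i \<in> I \<Longrightarrow> \<exists>L. L-lipschitz_on X (f i)"
  shows "\<exists>L. L-lipschitz_on X (\<lambda>x. \<Sum>i\<in>I. f i x)"
proof -
  obtain L where "\<forall>i\<in>I. L-lipschitz_on X (f i)"
    using lipschitz_on_uniform_finite[of I X f] assms by blast
  then show ?thesis using lipschitz_on_sum[OF assms(1), of "\<lambda>_. L"] by blast
qed

lemma lipschitz_on_mult_bounded:
  fixes f g :: "'a::metric_space \<Rightarrow> real"
  assumes f: "L-lipschitz_on X f" and g: "M-lipschitz_on X g"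
    and bf: "\<And>x. x \<in> X \<Longrightarrow> \<bar>f x\<bar> \<le> Bf" and bg: "\<And>x. x \<in> X \<Longrightarrow> \<bar>g x\<bar> \<le> Bg"
    and "0 \<le> Bf" "0 \<le> Bg"
  shows "(Bf * M + Bg * L)-lipschitz_on X (\<lambda>x. f x * g x)"
proof (rule lipschitz_onI)
  fix x y assume x: "x \<in> X" and y: "y \<in> X"
  have "\<bar>f x * g x - f y * g y\<bar> = \<bar>f x * (g x - g y) + g y * (f x - f y)\<bar>"
    by (simp add: algebra_simps)
  also have "\<dots> \<le> \<bar>f x\<bar> * \<bar>g x - g y\<bar> + \<bar>g y\<bar> * \<bar>f x - f y\<bar>"
    by (metis abs_mult abs_triangle_ineq)
  also have "\<dots> \<le> Bf * (M * dist x y) + Bg * (L * dist x y)"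
    using lipschitz_onD[OF f x y] lipschitz_onD[OF g x y] bf[OF x] bg[OF y]
    by (intro add_mono mult_mono) (auto simp: dist_real_def)
  finally show "dist (f x * g x) (f y * g y) \<le> (Bf * M + Bg * L) * dist x y"
    by (simp add: dist_real_def algebra_simps)
qed (use assms lipschitz_on_nonneg[OF f] lipschitz_on_nonneg[OF g] in auto)

lemma lipschitz_on_mult_compact:
  fixes f g :: "'a::metric_space \<Rightarrow> real"
  assumes X: "compact X" and f: "L-lipschitz_on X f" and g: "M-lipschitz_on X g"
  shows "\<exists>K. K-lipschitz_on X (\<lambda>x. f x * g x)"
proof -
  have "bounded (f ` X)" "bounded (g ` X)"
    using X f g by (auto intro!: compact_imp_bounded compact_continuous_image lipschitz_on_continuous_on)
  then obtain Bf Bg where "Bf > 0" "\<forall>x\<in>X. \<bar>f x\<bar> \<le> Bf" "Bg > 0" "\<forall>x\<in>X. \<bar>g x\<bar> \<le> Bg"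
    by (auto simp: bounded_pos)
  then show ?thesis using lipschitz_on_mult_bounded[OF f g] by (meson less_imp_le)
qed

lemma lipschitz_on_vec_nth: "1-lipschitz_on X (\<lambda>x::real^'n. x $ i)"
  by (rule lipschitz_onI) (simp_all add: dist_real_def dist_norm component_le_norm_cart flip: vector_minus_component)

lemma lipschitz_on_vec_lambda:
  fixes f :: "'a::metric_space \<Rightarrow> 'n::finite \<Rightarrow> real"
  assumes "\<And>i. L-lipschitz_on X (\<lambda>x. f x i)"
  shows "(real CARD('n) * L)-lipschitz_on X (\<lambda>x. \<chi> i. f x i)"
proof (rule lipschitz_onI)
  fix x y assume "x \<in> X" "y \<in> X"
  then have bound: "\<bar>f x i - f y i\<bar> \<le> L * dist x y" for i
    using lipschitz_onD[OF assms] by (simp add: dist_real_def)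
  have "(\<Sum>i\<in>UNIV. \<bar>f x i - f y i\<bar>) \<le> (\<Sum>i\<in>(UNIV::'n set). L * dist x y)"
    by (intro sum_mono bound)
  then have "norm ((\<chi> i. f x i) - (\<chi> i. f y i)) \<le> (\<Sum>i\<in>(UNIV::'n set). L * dist x y)"
    using norm_le_l1_cart[of "(\<chi> i. f x i) - (\<chi> i. f y i)"] by simp
  then show "dist (\<chi> i. f x i) (\<chi> i. f y i) \<le> real CARD('n) * L * dist x y"
    by (simp add: dist_norm)
qed (use lipschitz_on_nonneg[OF assms[of undefined]] in simp)

lemma nonpos_derivative_imp_le_initial:
  fixes f f' :: "real \<Rightarrow> real"
  assumes t: "0 \<le> t"
    and f': "\<And>\<tau>. 0 \<le> \<tau> \<Longrightarrow> \<tau> \<le> t \<Longrightarrow> (f has_real_derivative f' \<tau>) (at \<tau> within {0..})"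
    and nonpos: "\<And>\<tau>. 0 \<le> \<tau> \<Longrightarrow> \<tau> \<le> t \<Longrightarrow> f' \<tau> \<le> 0"
  shows "f t \<le> f 0"
proof (rule DERIV_nonpos_imp_decreasing_open[OF t])
  fix \<tau> :: real assume "0 < \<tau>" "\<tau> < t"
  moreover have "at \<tau> within {0..} = at \<tau>"
    using \<open>0 < \<tau>\<close> by (intro at_within_interior) auto
  ultimately show "\<exists>y. (f has_real_derivative y) (at \<tau>) \<and> y \<le> 0"
    using f'[of \<tau>] nonpos[of \<tau>] by (intro exI[of _ "f' \<tau>"]) auto
next
  show "continuous_on {0..t} f"
    unfolding continuous_on_eq_continuous_within
  proof
    fix x assume "x \<in> {0..t}"
    then have "(f has_real_derivative f' x) (at x within {0..t})"
      by (intro DERIV_subset[OF f']) auto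
    then show "continuous (at x within {0..t}) f" by (rule DERIV_continuous)
  qed
qed

lemma first_crossing:
  fixes \<phi> :: "real \<Rightarrow> real"
  assumes cont: "continuous_on {0..} \<phi>" and start: "\<phi> 0 < a" and t: "0 \<le> t" "a \<le> \<phi> t"
  obtains t1 where "0 \<le> t1" "a \<le> \<phi> t1" "\<And>\<tau>. 0 \<le> \<tau> \<Longrightarrow> \<tau> \<le> t1 \<Longrightarrow> \<phi> \<tau> \<le> a"
proof -
  define Z where "Z = {t \<in> {0..}. a \<le> \<phi> t}"
  have "Z \<noteq> {}" "bdd_below Z" using t by (auto simp: Z_def bdd_below_def)
  moreover have "closed Z"
    unfolding Z_def by (rule continuous_on_closed_Collect_le[OF continuous_on_const cont]) simp
  ultimately have "Inf Z \<in> Z" by (rule closed_contains_Inf)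
  then have t1: "0 \<le> Inf Z" "a \<le> \<phi> (Inf Z)" by (auto simp: Z_def)
  then have "Inf Z > 0" using start by (cases "Inf Z = 0") auto
  have "\<phi> \<tau> < a" if "0 \<le> \<tau>" "\<tau> < Inf Z" for \<tau>
    using cInf_lower[OF _ \<open>bdd_below Z\<close>, of \<tau>] that by (force simp: Z_def)
  then have "closure {0..<Inf Z} \<subseteq> {\<tau> \<in> {0..Inf Z}. \<phi> \<tau> \<le> a}"
    by (intro closure_minimal continuous_on_closed_Collect_le[OF continuous_on_subset[OF cont]])
      (auto intro: less_imp_le)
  then have "\<phi> \<tau> \<le> a" if "0 \<le> \<tau>" "\<tau> \<le> Inf Z" for \<tau>
    using that closure_atLeastLessThan[OF \<open>Inf Z > 0\<close>] by auto
  with t1 show ?thesis using that by blast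
qed

section \<open>Lazy versions of unichain Markov kernels\<close>

text \<open>Replacing a kernel P by its lazy version (I + P)/2 keeps the stationary
  distributions and makes every state reach itself at every time; together with the
  unique recurrent class this gives a column of some power that is bounded below on
  S (a Doeblin minorisation), hence geometric contraction of zero-sum vectors.\<close>

locale unichain =
  fixes S :: "'s::finite set" and P :: "'s \<Rightarrow> 's \<Rightarrow> real"
  assumes S_ne: "S \<noteq> {}"
    and P_nonneg: "\<And>s t. s \<in> S \<Longrightarrow> t \<in> S \<Longrightarrow> P s t \<ge> 0"
    and P_row_sum: "\<And>s. s \<in> S \<Longrightarrow> (\<Sum>t\<in>S. P s t) = 1"
    and unique_recurrent: "unique_recurrent_class S P"
begin

definition lazy :: "'s \<Rightarrow> 's \<Rightarrow> real" where
  "lazy r t = ((if r = t then 1 else 0) + P r t) / 2"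

definition lazy_step :: "('s \<Rightarrow> real) \<Rightarrow> 's \<Rightarrow> real" where
  "lazy_step w t = (\<Sum>r\<in>S. w r * lazy r t)"

definition lazy_iter :: "nat \<Rightarrow> ('s \<Rightarrow> real) \<Rightarrow> 's \<Rightarrow> real" where
  "lazy_iter k = lazy_step ^^ k"

fun lazy_pow :: "nat \<Rightarrow> 's \<Rightarrow> 's \<Rightarrow> real" where
  "lazy_pow 0 s t = (if s = t then 1 else 0)"
| "lazy_pow (Suc k) s t = (\<Sum>r\<in>S. lazy s r * lazy_pow k r t)"

lemma lazy_nonneg: "s \<in> S \<Longrightarrow> t \<in> S \<Longrightarrow> lazy s t \<ge> 0"
  using P_nonneg by (simp add: lazy_def)

lemma lazy_row_sum: "s \<in> S \<Longrightarrow> (\<Sum>t\<in>S. lazy s t) = 1"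
  by (simp add: lazy_def sum.distrib P_row_sum flip: sum_divide_distrib)

lemma lazy_iter_0 [simp]: "lazy_iter 0 w = w"
  by (simp add: lazy_iter_def)

lemma lazy_iter_Suc: "lazy_iter k (lazy_step w) = lazy_iter (Suc k) w"
  by (simp add: lazy_iter_def funpow_Suc_right del: funpow.simps)

lemma lazy_iter_add: "lazy_iter (a + b) w = lazy_iter b (lazy_iter a w)"
  unfolding lazy_iter_def by (subst add.commute) (simp only: funpow_add comp_apply)

lemma lazy_iter_eq_sum: "t \<in> S \<Longrightarrow> lazy_iter k w t = (\<Sum>s\<in>S. w s * lazy_pow k s t)"
proof (induction k arbitrary: w)
  case 0
  then show ?case by (simp add: if_distrib cong: if_cong)
next
  case (Suc k)
  have "lazy_iter (Suc k) w t = (\<Sum>r\<in>S. lazy_step w r * lazy_pow k r t)"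
    using Suc by (simp flip: lazy_iter_Suc)
  also have "\<dots> = (\<Sum>s\<in>S. \<Sum>r\<in>S. w s * lazy s r * lazy_pow k r t)"
    by (simp add: lazy_step_def sum_distrib_right) (rule sum.swap)
  also have "\<dots> = (\<Sum>s\<in>S. w s * lazy_pow (Suc k) s t)"
    by (simp add: sum_distrib_left mult.assoc)
  finally show ?case .
qed

lemma lazy_pow_nonneg: "s \<in> S \<Longrightarrow> t \<in> S \<Longrightarrow> lazy_pow k s t \<ge> 0"
  by (induction k arbitrary: s) (auto intro!: sum_nonneg mult_nonneg_nonneg lazy_nonneg)

lemma lazy_pow_row_sum: "s \<in> S \<Longrightarrow> (\<Sum>t\<in>S. lazy_pow k s t) = 1"
proof (induction k arbitrary: s)
  case (Suc k)
  have "(\<Sum>t\<in>S. lazy_pow (Suc k) s t) = (\<Sum>r\<in>S. lazy s r * (\<Sum>t\<in>S. lazy_pow k r t))"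
    by (simp add: sum_distrib_left) (rule sum.swap)
  also have "\<dots> = 1" using Suc by (simp add: lazy_row_sum)
  finally show ?case .
qed simp

lemma lazy_pow_le_1: "s \<in> S \<Longrightarrow> t \<in> S \<Longrightarrow> lazy_pow k s t \<le> 1"
  using member_le_sum[of t S "lazy_pow k s"] lazy_pow_nonneg lazy_pow_row_sum by simp

lemma lazy_pow_Suc_ge:
  "s \<in> S \<Longrightarrow> r \<in> S \<Longrightarrow> t \<in> S \<Longrightarrow> lazy s r * lazy_pow k r t \<le> lazy_pow (Suc k) s t"
  by simp (rule member_le_sum, auto intro!: mult_nonneg_nonneg lazy_nonneg lazy_pow_nonneg)

lemma lazy_pow_pos_mono:
  assumes "s \<in> S" "t \<in> S" "lazy_pow k s t > 0" "k \<le> j"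
  shows "lazy_pow j s t > 0"
  using assms(4)
proof (induction j)
  case (Suc j)
  show ?case
  proof (cases "k = Suc j")
    case False
    then have "lazy s s * lazy_pow j s t > 0"
      using Suc P_nonneg[of s s] assms(1) by (simp add: lazy_def)
    then show ?thesis using lazy_pow_Suc_ge[of s s t j] assms by linarith
  qed (use assms in simp)
qed (use assms in simp)

lemma reach_imp_lazy_pow_pos:
  assumes "reach S P s t" "t \<in> S"
  shows "\<exists>k. lazy_pow k s t > 0"
  using assms unfolding reach_def
proof (induction rule: converse_rtrancl_induct)
  case (step y z)
  then have yz: "y \<in> S" "z \<in> S" "lazy y z > 0"
    using P_nonneg[of z z] by (auto simp: lazy_def)
  obtain k where "lazy_pow k z t > 0" using step by auto
  then have "lazy y z * lazy_pow k z t > 0" using yz by simp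
  then show ?case
    using lazy_pow_Suc_ge[of y z t k] yz step.prems by (intro exI[of _ "Suc k"]) linarith
qed (intro exI[of _ 0], simp)

lemma reach_recurrent_state:
  assumes s: "s \<in> S"
  shows "\<exists>t. recurrent S P t \<and> reach S P s t"
proof -
  define succ where "succ t = {v \<in> S. reach S P t v}" for t
  have reach_trans: "reach S P a b \<Longrightarrow> reach S P b c \<Longrightarrow> reach S P a c" for a b c
    unfolding reach_def by (rule rtrancl_trans)
  have reach_S: "reach S P a b \<Longrightarrow> a \<in> S \<Longrightarrow> b \<in> S" for a b
    unfolding reach_def by (induction rule: rtrancl_induct) auto
  \<comment> \<open>a reachable state with fewest successors is recurrent\<close>
  obtain t where t: "reach S P s t" and tmin: "\<And>t'. reach S P s t' \<Longrightarrow> card (succ t) \<le> card (succ t')"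
    using ex_has_least_nat[of "reach S P s" s "\<lambda>t. card (succ t)"] by (auto simp: reach_def)
  have tS: "t \<in> S" using t s reach_S by blast
  have "recurrent S P t"
    unfolding recurrent_def
  proof (intro conjI ballI impI tS)
    fix v assume v: "v \<in> S" "reach S P t v"
    have "succ v \<subseteq> succ t" using v by (auto simp: succ_def intro: reach_trans)
    moreover have "card (succ t) \<le> card (succ v)" using tmin t v reach_trans by blast
    ultimately have "succ v = succ t" by (simp add: card_seteq succ_def)
    moreover have "t \<in> succ t" using tS by (simp add: succ_def reach_def)
    ultimately have "t \<in> succ v" by simp
    then show "reach S P v t" by (simp add: succ_def)
  qed
  then show ?thesis using t by blast
qed

lemma lazy_pow_doeblin: "\<exists>n r \<delta>. n \<ge> 1 \<and> r \<in> S \<and> \<delta> > 0 \<and> (\<forall>s\<in>S. lazy_pow n s r \<ge> \<delta>)"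
proof -
  obtain s0 where "s0 \<in> S" using S_ne by auto
  then obtain r where r: "recurrent S P r" using reach_recurrent_state by blast
  have rS: "r \<in> S" using r by (simp add: recurrent_def)
  have "\<exists>k. lazy_pow k s r > 0" if s: "s \<in> S" for s
  proof -
    obtain t where t: "recurrent S P t" "reach S P s t" using reach_recurrent_state[OF s] by auto
    have "t \<in> S" using t(1) by (simp add: recurrent_def)
    then have "reach S P t r"
      using unique_recurrent t(1) r rS unfolding unique_recurrent_class_def by blast
    then have "reach S P s r" using t unfolding reach_def by (meson rtrancl_trans)
    then show ?thesis using reach_imp_lazy_pow_pos rS by blast
  qed
  then obtain k where k: "\<forall>s\<in>S. lazy_pow (k s) s r > 0" by metis
  define n where "n = Suc (Max (k ` S))"
  have pos: "\<forall>s\<in>S. lazy_pow n s r > 0"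
  proof
    fix s assume "s \<in> S"
    moreover have "k s \<le> n" using \<open>s \<in> S\<close> by (simp add: n_def le_SucI)
    ultimately show "lazy_pow n s r > 0" using k rS lazy_pow_pos_mono by blast
  qed
  define \<delta> where "\<delta> = Min ((\<lambda>s. lazy_pow n s r) ` S)"
  have "\<delta> > 0" unfolding \<delta>_def using pos S_ne by (subst Min_gr_iff) auto
  moreover have "\<forall>s\<in>S. lazy_pow n s r \<ge> \<delta>" unfolding \<delta>_def by auto
  moreover have "n \<ge> 1" by (simp add: n_def)
  ultimately show ?thesis using rS by blast
qed

lemma sum_lazy_iter: "(\<Sum>t\<in>S. lazy_iter k w t) = (\<Sum>s\<in>S. w s)"
proof -
  have "(\<Sum>t\<in>S. lazy_iter k w t) = (\<Sum>s\<in>S. w s * (\<Sum>t\<in>S. lazy_pow k s t))"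
    by (simp add: lazy_iter_eq_sum sum_distrib_left) (rule sum.swap)
  then show ?thesis by (simp add: lazy_pow_row_sum)
qed

lemma sum_abs_lazy_iter_le: "(\<Sum>t\<in>S. \<bar>lazy_iter k w t\<bar>) \<le> (\<Sum>s\<in>S. \<bar>w s\<bar>)"
proof -
  have "(\<Sum>t\<in>S. \<bar>lazy_iter k w t\<bar>) \<le> (\<Sum>t\<in>S. \<Sum>s\<in>S. \<bar>w s\<bar> * lazy_pow k s t)"
    by (intro sum_mono) (auto simp: lazy_iter_eq_sum abs_mult lazy_pow_nonneg intro: sum_abs[THEN order_trans])
  also have "\<dots> = (\<Sum>s\<in>S. \<bar>w s\<bar> * (\<Sum>t\<in>S. lazy_pow k s t))"
    by (simp add: sum_distrib_left) (rule sum.swap)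
  finally show ?thesis by (simp add: lazy_pow_row_sum)
qed

text \<open>Subtracting the minorising mass \<delta> at r from every row leaves a kernel of row sum
  1 - \<delta>; on zero-sum vectors the subtracted part contributes nothing.\<close>

lemma lazy_iter_l1_contraction:
  assumes r: "r \<in> S" and d: "\<forall>s\<in>S. lazy_pow n s r \<ge> \<delta>" and z: "(\<Sum>s\<in>S. w s) = 0"
  shows "(\<Sum>t\<in>S. \<bar>lazy_iter n w t\<bar>) \<le> (1 - \<delta>) * (\<Sum>s\<in>S. \<bar>w s\<bar>)"
proof -
  define K where "K s t = lazy_pow n s t - (if t = r then \<delta> else 0)" for s t
  have K_nonneg: "K s t \<ge> 0" if "s \<in> S" "t \<in> S" for s t
    using d that lazy_pow_nonneg[of s t n] by (auto simp: K_def)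
  have eq: "lazy_iter n w t = (\<Sum>s\<in>S. w s * K s t)" if "t \<in> S" for t
    using z that by (simp add: K_def lazy_iter_eq_sum right_diff_distrib sum_subtractf
        flip: sum_distrib_right)
  have "(\<Sum>t\<in>S. \<bar>lazy_iter n w t\<bar>) \<le> (\<Sum>t\<in>S. \<Sum>s\<in>S. \<bar>w s\<bar> * K s t)"
    by (intro sum_mono) (auto simp: eq abs_mult K_nonneg intro: sum_abs[THEN order_trans])
  also have "\<dots> = (\<Sum>s\<in>S. \<bar>w s\<bar> * (\<Sum>t\<in>S. K s t))"
    by (simp add: sum_distrib_left) (rule sum.swap)
  also have "\<dots> = (\<Sum>s\<in>S. \<bar>w s\<bar> * (1 - \<delta>))"
    using r by (intro sum.cong) (simp_all add: K_def sum_subtractf lazy_pow_row_sum)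
  also have "\<dots> = (1 - \<delta>) * (\<Sum>s\<in>S. \<bar>w s\<bar>)"
    by (simp add: sum_distrib_left mult.commute)
  finally show ?thesis .
qed

lemma lazy_iter_l1_contraction_power:
  assumes r: "r \<in> S" and d: "\<forall>s\<in>S. lazy_pow n s r \<ge> \<delta>" and \<delta>: "\<delta> \<le> 1"
    and z: "(\<Sum>s\<in>S. w s) = 0"
  shows "(\<Sum>t\<in>S. \<bar>lazy_iter (i * n) w t\<bar>) \<le> (1 - \<delta>) ^ i * (\<Sum>s\<in>S. \<bar>w s\<bar>)"
proof (induction i)
  case (Suc i)
  have "lazy_iter (Suc i * n) w = lazy_iter n (lazy_iter (i * n) w)"
    by (simp add: lazy_iter_add[symmetric] add.commute)
  then have "(\<Sum>t\<in>S. \<bar>lazy_iter (Suc i * n) w t\<bar>) \<le> (1 - \<delta>) * (\<Sum>t\<in>S. \<bar>lazy_iter (i * n) w t\<bar>)"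
    using lazy_iter_l1_contraction[OF r d] z by (simp add: sum_lazy_iter)
  also have "\<dots> \<le> (1 - \<delta>) * ((1 - \<delta>) ^ i * (\<Sum>s\<in>S. \<bar>w s\<bar>))"
    using Suc \<delta> by (intro mult_left_mono) auto
  finally show ?case by simp
qed simp

lemma lazy_iter_l2_contraction:
  "\<exists>N\<ge>1. \<forall>w. (\<Sum>s\<in>S. w s) = 0 \<longrightarrow> (\<Sum>t\<in>S. (lazy_iter N w t)\<^sup>2) \<le> 1/4 * (\<Sum>s\<in>S. (w s)\<^sup>2)"
proof -
  obtain n r \<delta> where n: "n \<ge> 1" and r: "r \<in> S" and \<delta>: "\<delta> > 0"
    and d: "\<forall>s\<in>S. lazy_pow n s r \<ge> \<delta>"
    using lazy_pow_doeblin by auto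
  have "\<delta> \<le> 1" using d r lazy_pow_le_1[OF r r, of n] by force
  define q where "q = (1 - \<delta>)\<^sup>2"
  have q: "0 \<le> q" "q < 1" using \<delta> \<open>\<delta> \<le> 1\<close> by (auto simp: q_def abs_square_less_1)
  have "(\<lambda>j. q ^ j * real (card S)) \<longlonglongrightarrow> 0 * real (card S)"
    using q by (intro tendsto_mult_right LIMSEQ_power_zero) auto
  then obtain j0 where "\<forall>j\<ge>j0. q ^ j * real (card S) < 1/4"
    by (auto dest!: order_tendstoD(2)[of _ _ _ "1/4"] simp: eventually_sequentially)
  then obtain j where j: "q ^ Suc j * real (card S) \<le> 1/4"
    using le_SucI less_imp_le by blast
  show ?thesis
  proof (intro exI[of _ "Suc j * n"] conjI allI impI)
    show "1 \<le> Suc j * n" using n by simp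
  next
    fix w :: "'s \<Rightarrow> real" assume z: "(\<Sum>s\<in>S. w s) = 0"
    have "(\<Sum>t\<in>S. (lazy_iter (Suc j * n) w t)\<^sup>2) \<le> (\<Sum>t\<in>S. \<bar>lazy_iter (Suc j * n) w t\<bar>)\<^sup>2"
      by (rule sum_power2_le_power2_sum_abs)
    also have "\<dots> \<le> ((1 - \<delta>) ^ Suc j * (\<Sum>s\<in>S. \<bar>w s\<bar>))\<^sup>2"
      using lazy_iter_l1_contraction_power[OF r d \<open>\<delta> \<le> 1\<close> z, of "Suc j"]
      by (intro power_mono) (auto simp: sum_nonneg)
    also have "\<dots> = q ^ Suc j * (\<Sum>s\<in>S. \<bar>w s\<bar>)\<^sup>2"
      by (simp add: q_def power_mult_distrib flip: power_mult) (simp add: mult.commute)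
    also have "\<dots> \<le> q ^ Suc j * (real (card S) * (\<Sum>s\<in>S. (w s)\<^sup>2))"
      using sum_squared_le_sum_of_squares[of "\<lambda>s. \<bar>w s\<bar>" S] q
      by (intro mult_left_mono) (auto simp: mult.commute)
    also have "\<dots> \<le> 1/4 * (\<Sum>s\<in>S. (w s)\<^sup>2)"
      using j by (simp only: mult.assoc[symmetric]) (intro mult_right_mono, auto simp: sum_nonneg)
    finally show "(\<Sum>t\<in>S. (lazy_iter (Suc j * n) w t)\<^sup>2) \<le> 1/4 * (\<Sum>s\<in>S. (w s)\<^sup>2)" .
  qed
qed

lemma sum_power2_lazy_iter_le:
  "(\<Sum>t\<in>S. (lazy_iter k w t)\<^sup>2) \<le> real (card S) * (\<Sum>s\<in>S. (w s)\<^sup>2)"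
proof -
  have "(\<Sum>t\<in>S. (lazy_iter k w t)\<^sup>2) \<le> (\<Sum>t\<in>S. \<bar>lazy_iter k w t\<bar>)\<^sup>2"
    by (rule sum_power2_le_power2_sum_abs)
  also have "\<dots> \<le> (\<Sum>s\<in>S. \<bar>w s\<bar>)\<^sup>2"
    by (intro power_mono sum_abs_lazy_iter_le) (simp add: sum_nonneg)
  also have "\<dots> \<le> real (card S) * (\<Sum>s\<in>S. (w s)\<^sup>2)"
    using sum_squared_le_sum_of_squares[of "\<lambda>s. \<bar>w s\<bar>" S] by (simp add: mult.commute)
  finally show ?thesis .
qed

lemma lazy_step_stationary:
  assumes "stationary_dist S P e" "t \<in> S"
  shows "lazy_step e t = e t"
proof -
  have "lazy_step e t = ((\<Sum>r\<in>S. e r * (if r = t then 1 else 0)) + (\<Sum>r\<in>S. e r * P r t)) / 2"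
    unfolding lazy_step_def lazy_def
    by (simp only: sum.distrib[symmetric] sum_divide_distrib distrib_left times_divide_eq_right)
  also have "\<dots> = e t" using assms by (simp add: stationary_dist_def if_distrib cong: if_cong)
  finally show ?thesis .
qed

lemma lazy_iter_fixpoint:
  assumes "\<And>t. t \<in> S \<Longrightarrow> lazy_step w t = w t" and "t \<in> S"
  shows "lazy_iter k w t = w t"
  using assms(2)
proof (induction k arbitrary: t)
  case (Suc k)
  have "lazy_iter (Suc k) w t = (\<Sum>s\<in>S. lazy_step w s * lazy_pow k s t)"
    using Suc.prems by (simp add: lazy_iter_eq_sum flip: lazy_iter_Suc)
  also have "\<dots> = lazy_iter k w t"
    using Suc.prems assms(1) by (simp add: lazy_iter_eq_sum)
  finally show ?case using Suc by simp
qed simp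

lemma stationary_dist_unique:
  assumes e1: "stationary_dist S P e1" and e2: "stationary_dist S P e2"
  shows "e1 = e2"
proof -
  define w where "w s = e1 s - e2 s" for s
  obtain N where N: "\<And>w. (\<Sum>s\<in>S. w s) = 0 \<Longrightarrow>
      (\<Sum>t\<in>S. (lazy_iter N w t)\<^sup>2) \<le> 1/4 * (\<Sum>s\<in>S. (w s)\<^sup>2)"
    using lazy_iter_l2_contraction by blast
  have "lazy_step w t = w t" if "t \<in> S" for t
    using that lazy_step_stationary[OF e1] lazy_step_stationary[OF e2]
    by (simp add: w_def lazy_step_def left_diff_distrib sum_subtractf)
  then have "lazy_iter N w t = w t" if "t \<in> S" for t
    using that by (rule lazy_iter_fixpoint)
  moreover have "(\<Sum>s\<in>S. w s) = 0"
    using e1 e2 by (simp add: w_def sum_subtractf stationary_dist_def)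
  ultimately have "(\<Sum>s\<in>S. (w s)\<^sup>2) \<le> 1/4 * (\<Sum>s\<in>S. (w s)\<^sup>2)"
    using N[of w] by simp
  then have "(\<Sum>s\<in>S. (w s)\<^sup>2) = 0" by (simp add: eq_iff sum_nonneg)
  then have "\<forall>s\<in>S. w s = 0" by (simp add: sum_nonneg_eq_0_iff)
  then show "e1 = e2" using e1 e2 by (auto simp: w_def stationary_dist_def fun_eq_iff)
qed

definition prob_simplex :: "(real^'s) set" where
  "prob_simplex = {v. (\<forall>s. s \<notin> S \<longrightarrow> v $ s = 0) \<and> (\<forall>s. 0 \<le> v $ s) \<and> (\<Sum>s\<in>S. v $ s) = 1}"

lemma compact_prob_simplex: "compact prob_simplex"
proof -
  have "closed prob_simplex"
    unfolding prob_simplex_def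
    by (intro closed_Collect_conj closed_Collect_all closed_Collect_imp open_Collect_const
        closed_Collect_eq closed_Collect_le continuous_intros)
  moreover have "bounded prob_simplex"
  proof (rule bounded_if_components_bounded)
    fix v i assume "v \<in> prob_simplex"
    then show "\<bar>v $ i\<bar> \<le> 1"
      using member_le_sum[of i S "\<lambda>s. v $ s"] by (cases "i \<in> S") (auto simp: prob_simplex_def)
  qed
  ultimately show ?thesis by (simp add: compact_eq_bounded_closed)
qed

lemma convex_prob_simplex: "convex prob_simplex"
  unfolding convex_def prob_simplex_def by (auto simp: sum.distrib simp flip: sum_distrib_left)

lemma prob_simplex_ne: "prob_simplex \<noteq> {}"
proof -
  obtain s0 where "s0 \<in> S" using S_ne by auto
  then have "(\<chi> s. if s = s0 then 1 else 0) \<in> prob_simplex"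
    by (auto simp: prob_simplex_def if_distrib cong: if_cong)
  then show ?thesis by auto
qed

lemma stationary_dist_exists: "\<exists>e. stationary_dist S P e"
proof -
  define f where "f v = (\<chi> t. if t \<in> S then (\<Sum>s\<in>S. v $ s * P s t) else 0)" for v :: "real^'s"
  have "continuous_on prob_simplex f"
    unfolding f_def
  proof (intro continuous_on_vec_lambda)
    fix t show "continuous_on prob_simplex (\<lambda>v. if t \<in> S then \<Sum>s\<in>S. v $ s * P s t else 0)"
      by (cases "t \<in> S") (auto intro!: continuous_intros)
  qed
  moreover have "f \<in> prob_simplex \<rightarrow> prob_simplex"
  proof
    fix v assume v: "v \<in> prob_simplex"
    have "(\<Sum>t\<in>S. f v $ t) = (\<Sum>s\<in>S. v $ s * (\<Sum>t\<in>S. P s t))"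
      by (simp add: f_def sum_distrib_left) (rule sum.swap)
    then have "(\<Sum>t\<in>S. f v $ t) = 1" using v by (simp add: P_row_sum prob_simplex_def)
    then show "f v \<in> prob_simplex"
      using v P_nonneg by (auto simp: f_def prob_simplex_def intro!: sum_nonneg)
  qed
  ultimately obtain v where v: "v \<in> prob_simplex" "f v = v"
    using brouwer[OF compact_prob_simplex convex_prob_simplex prob_simplex_ne] by blast
  have "(\<Sum>s'\<in>S. v $ s' * P s' s) = v $ s" if "s \<in> S" for s
    using arg_cong[OF v(2), of "\<lambda>v. v $ s"] that by (simp add: f_def)
  then have "stationary_dist S P (\<lambda>s. v $ s)"
    using v(1) by (auto simp: stationary_dist_def prob_simplex_def)
  then show ?thesis by blast
qed

lemma stationary_dist_The: "stationary_dist S P (THE e. stationary_dist S P e)"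
  using stationary_dist_exists stationary_dist_unique by (metis theI)

text \<open>Each summand 2a(a' - a) is at most a'^2 - a^2, so the sum over k telescopes to a
  multiple of the contraction defect; the forcing h is absorbed by 2ab \<le> \<eta>a^2 + b^2/\<eta>.\<close>

lemma lazy_energy_dissipation:
  assumes N: "\<And>w. (\<Sum>s\<in>S. w s) = 0 \<Longrightarrow> (\<Sum>t\<in>S. (lazy_iter N w t)\<^sup>2) \<le> 1/4 * (\<Sum>s\<in>S. (w s)\<^sup>2)"
    and z: "(\<Sum>s\<in>S. z s) = 0" and R: "R \<ge> 0" and \<eta>: "\<eta> > 0"
  shows "(\<Sum>k<N. \<Sum>t\<in>S. 2 * lazy_iter k z t *
            (2 * R * (lazy_iter (Suc k) z t - lazy_iter k z t) + lazy_iter k h t))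
    \<le> - (3/2) * R * (\<Sum>s\<in>S. (z s)\<^sup>2)
       + real N * real (card S) * (\<eta> * (\<Sum>s\<in>S. (z s)\<^sup>2) + (\<Sum>s\<in>S. (h s)\<^sup>2) / \<eta>)"
proof -
  define g where "g k = (\<Sum>t\<in>S. (lazy_iter k z t)\<^sup>2)" for k
  define Z where "Z = (\<Sum>s\<in>S. (z s)\<^sup>2)"
  define H where "H = (\<Sum>s\<in>S. (h s)\<^sup>2)"
  have pointwise: "2 * a * (2 * R * (a' - a) + b) \<le> 2 * R * (a'\<^sup>2 - a\<^sup>2) + (\<eta> * a\<^sup>2 + b\<^sup>2 / \<eta>)"
    for a a' b :: real
  proof -
    have "0 \<le> 2 * R * (a' - a)\<^sup>2" using R by simp
    then have "2 * a * (2 * R * (a' - a)) \<le> 2 * R * (a'\<^sup>2 - a\<^sup>2)"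
      by (simp add: power2_eq_square algebra_simps)
    then show ?thesis using two_mult_le_weighted_squares[OF \<eta>, of a b] by (simp add: algebra_simps)
  qed
  have "(\<Sum>k<N. \<Sum>t\<in>S. 2 * lazy_iter k z t *
            (2 * R * (lazy_iter (Suc k) z t - lazy_iter k z t) + lazy_iter k h t))
      \<le> (\<Sum>k<N. 2 * R * (g (Suc k) - g k) + (\<eta> * g k + (\<Sum>t\<in>S. (lazy_iter k h t)\<^sup>2) / \<eta>))"
    unfolding g_def
    by (intro sum_mono order_trans[OF sum_mono[OF pointwise]])
      (simp add: sum.distrib sum_subtractf sum_distrib_left sum_divide_distrib right_diff_distrib)
  also have "\<dots> = 2 * R * (g N - g 0) + (\<Sum>k<N. \<eta> * g k + (\<Sum>t\<in>S. (lazy_iter k h t)\<^sup>2) / \<eta>)"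
    by (simp add: sum.distrib sum_lessThan_telescope flip: sum_distrib_left)
  also have "\<dots> \<le> 2 * R * (1/4 * Z - Z) + (\<Sum>k<N. \<eta> * (real (card S) * Z) + real (card S) * H / \<eta>)"
    using N[OF z] R \<eta> sum_power2_lazy_iter_le
    by (intro add_mono mult_left_mono sum_mono divide_right_mono) (auto simp: g_def Z_def H_def)
  finally show ?thesis by (simp add: Z_def H_def algebra_simps)
qed

end

section \<open>The population model\<close>

locale population_model =
  fixes S :: "'c::finite \<Rightarrow> 's::finite set"
    and A :: "'c \<Rightarrow> 's \<Rightarrow> 'a::finite set"
    and phi :: "'c \<Rightarrow> 's \<Rightarrow> 'a \<Rightarrow> 's \<Rightarrow> real"
    and U :: "'c \<Rightarrow> ('s \<Rightarrow> 'a) set"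
    and m :: "'c \<Rightarrow> real"
  assumes S_ne: "\<And>c. S c \<noteq> {}"
    and phi_nonneg: "\<And>c s a s'. s \<in> S c \<Longrightarrow> a \<in> A c s \<Longrightarrow> s' \<in> S c \<Longrightarrow> phi c s a s' \<ge> 0"
    and phi_sum: "\<And>c s a. s \<in> S c \<Longrightarrow> a \<in> A c s \<Longrightarrow> (\<Sum>s'\<in>S c. phi c s a s') = 1"
    and U_ne: "\<And>c. U c \<noteq> {}"
    and U_pol: "\<And>c u s. u \<in> U c \<Longrightarrow> s \<in> S c \<Longrightarrow> u s \<in> A c s"
    and unichain: "\<And>c u. u \<in> U c \<Longrightarrow> unique_recurrent_class (S c) (kern phi c u)"
    and m_pos: "\<And>c. m c > 0"
begin

lemma unichain_kern: "u \<in> U c \<Longrightarrow> unichain (S c) (kern phi c u)"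
  by unfold_locales (auto simp: kern_def S_ne phi_nonneg phi_sum U_pol unichain)

lemma eta_stationary: "u \<in> U c \<Longrightarrow> stationary_dist (S c) (kern phi c u) (eta S phi c u)"
  unfolding eta_def by (rule unichain.stationary_dist_The[OF unichain_kern])

lemma eta_nonneg: "u \<in> U c \<Longrightarrow> eta S phi c u s \<ge> 0"
  using eta_stationary[of u c] by (cases "s \<in> S c") (auto simp: stationary_dist_def)

lemma eta_sum: "u \<in> U c \<Longrightarrow> (\<Sum>s\<in>S c. eta S phi c u s) = 1"
  using eta_stationary[of u c] by (simp add: stationary_dist_def)

lemma eta_balance:
  "u \<in> U c \<Longrightarrow> s \<in> S c \<Longrightarrow> (\<Sum>s'\<in>S c. eta S phi c u s' * phi c s' (u s') s) = eta S phi c u s"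
  using eta_stationary[of u c] by (simp add: stationary_dist_def kern_def)

definition slow_part :: "('c,'s,'a) pstate \<Rightarrow> ('c,'s,'a) pdist" where
  "slow_part \<mu> = (\<chi> i. case i of (c, u) \<Rightarrow> if u \<in> U c then pol_mass S \<mu> c u else 0)"

definition fast_part :: "('c,'s,'a) pstate \<Rightarrow> ('c,'s,'a) pstate" where
  "fast_part \<mu> = \<mu> - BSK S U phi (slow_part \<mu>)"

lemma slow_part_nth: "slow_part \<mu> $ (c, u) = (if u \<in> U c then (\<Sum>s\<in>S c. \<mu> $ (c, s, u)) else 0)"
  by (simp add: slow_part_def pol_mass_def)

lemma BSK_nth:
  "BSK S U phi x $ (c, s, u) = (if s \<in> S c \<and> u \<in> U c then x $ (c, u) * eta S phi c u s else 0)"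
  by (simp add: BSK_def)

lemma fast_part_nth: "fast_part \<mu> $ (c, s, u) = \<mu> $ (c, s, u) -
    (if s \<in> S c \<and> u \<in> U c then (\<Sum>s'\<in>S c. \<mu> $ (c, s', u)) * eta S phi c u s else 0)"
  by (simp add: fast_part_def BSK_nth slow_part_nth)

lemma linear_slow_part: "linear slow_part"
  by (rule linearI) (auto simp: vec_eq_iff slow_part_nth sum.distrib sum_distrib_left)

lemma linear_BSK: "linear (BSK S U phi)"
  by (rule linearI) (auto simp: vec_eq_iff BSK_nth algebra_simps)

lemma linear_fast_part: "linear fast_part"
  unfolding fast_part_def
  using linear_compose[OF linear_slow_part linear_BSK] by (intro linear_compose_sub linear_ident) (simp add: o_def)

lemma slow_part_BSK:
  assumes "x \<in> Dx U m"
  shows "slow_part (BSK S U phi x) = x"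
proof (rule vec_eq_iff[THEN iffD2], intro allI)
  fix i :: "'c \<times> ('s \<Rightarrow> 'a)"
  obtain c u where i: "i = (c, u)" by (cases i)
  show "slow_part (BSK S U phi x) $ i = x $ i"
  proof (cases "u \<in> U c")
    case True
    have "(\<Sum>s\<in>S c. BSK S U phi x $ (c, s, u)) = x $ (c, u) * (\<Sum>s\<in>S c. eta S phi c u s)"
      using True by (simp add: BSK_nth sum_distrib_left)
    then show ?thesis using True i eta_sum[OF True] by (simp add: slow_part_nth)
  qed (use assms i in \<open>simp add: slow_part_nth Dx_def\<close>)
qed

lemma fast_part_BSK: "x \<in> Dx U m \<Longrightarrow> fast_part (BSK S U phi x) = 0"
  by (simp add: fast_part_def slow_part_BSK)

lemma BSK_mem_popX:
  assumes x: "x \<in> Dx U m"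
  shows "BSK S U phi x \<in> popX S U m"
proof -
  have "(\<Sum>s\<in>S c. \<Sum>u\<in>U c. BSK S U phi x $ (c, s, u)) = m c" for c
  proof -
    have "(\<Sum>s\<in>S c. \<Sum>u\<in>U c. BSK S U phi x $ (c, s, u)) = (\<Sum>u\<in>U c. x $ (c, u) * (\<Sum>s\<in>S c. eta S phi c u s))"
      by (subst sum.swap) (simp add: BSK_nth sum_distrib_left)
    also have "\<dots> = m c" using x by (simp add: eta_sum Dx_def)
    finally show ?thesis .
  qed
  moreover have "BSK S U phi x $ (c, s, u) \<ge> 0" for c s u
    using x eta_nonneg[of u c s] by (auto simp: BSK_nth Dx_def)
  ultimately show ?thesis by (auto simp: popX_def BSK_nth)
qed

lemma slow_part_mem_Dx:
  assumes \<mu>: "\<mu> \<in> popX S U m"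
  shows "slow_part \<mu> \<in> Dx U m"
proof -
  have "(\<Sum>u\<in>U c. slow_part \<mu> $ (c, u)) = m c" for c
    using \<mu> by (simp add: slow_part_nth popX_def) (subst sum.swap, simp)
  moreover have "slow_part \<mu> $ i \<ge> 0" for i
    using \<mu> by (cases i) (auto simp: slow_part_nth popX_def intro!: sum_nonneg)
  moreover have "slow_part \<mu> $ (c, u) = 0" if "u \<notin> U c" for c u
    using that by (simp add: slow_part_nth)
  ultimately show ?thesis unfolding Dx_def by blast
qed

lemma fast_part_outside: "\<mu> \<in> popX S U m \<Longrightarrow> \<not> (s \<in> S c \<and> u \<in> U c) \<Longrightarrow> fast_part \<mu> $ (c, s, u) = 0"
  by (auto simp: fast_part_nth popX_def)

lemma sum_fast_part: "u \<in> U c \<Longrightarrow> (\<Sum>s\<in>S c. fast_part \<mu> $ (c, s, u)) = 0"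
  by (simp add: fast_part_nth sum_subtractf eta_sum flip: sum_distrib_left)

lemma fd_BSK: "u \<in> U c \<Longrightarrow> s \<in> S c \<Longrightarrow> fd S phi R (BSK S U phi x) c s u = 0"
  by (simp add: fd_def BSK_nth mult_ac eta_balance flip: sum_distrib_left)

lemma sum_fd: "u \<in> U c \<Longrightarrow> (\<Sum>s\<in>S c. fd S phi R \<mu> c s u) = 0"
proof -
  assume u: "u \<in> U c"
  have "(\<Sum>s\<in>S c. \<Sum>s'\<in>S c. phi c s' (u s') s * \<mu> $ (c, s', u))
      = (\<Sum>s'\<in>S c. \<mu> $ (c, s', u) * (\<Sum>s\<in>S c. phi c s' (u s') s))"
    by (subst sum.swap) (simp add: sum_distrib_left mult_ac)
  also have "\<dots> = (\<Sum>s\<in>S c. \<mu> $ (c, s, u))"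
    using u by (intro sum.cong) (auto simp: phi_sum U_pol)
  finally show ?thesis by (simp add: fd_def sum_subtractf flip: sum_distrib_left)
qed

lemma BSK_mem_MSNE:
  assumes x: "x \<in> NE_ss S U m phi F"
  shows "BSK S U phi x \<in> MSNE S U m phi F"
proof -
  have xD: "x \<in> Dx U m" using x by (simp add: NE_ss_def)
  have "pol_mass S (BSK S U phi x) c u = x $ (c, u)" if "u \<in> U c" for c u
    using arg_cong[OF slow_part_BSK[OF xD], of "\<lambda>v. v $ (c, u)"] that
    by (simp add: slow_part_nth pol_mass_def)
  then show ?thesis
    using x BSK_mem_popX[OF xD] fd_BSK by (auto simp: MSNE_def NE_ss_def ssgame_def)
qed

lemma slow_part_Efield:
  "slow_part (Efield S U phi R F rho \<mu>) $ (c, u) = (if u \<in> U c then (\<Sum>s\<in>S c. fr S U F rho \<mu> c s u) else 0)"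
  by (simp add: slow_part_nth Efield_def sum.distrib sum_fd)

lemma gred_eq_sum_fr:
  assumes x: "x \<in> Dx U m" and u: "u \<in> U c"
  shows "gred S U phi F rho x $ (c, u) = (\<Sum>s\<in>S c. fr S U F rho (BSK S U phi x) c s u)"
proof -
  define p where "p = (\<chi> v. if v \<in> U c then ssgame S U phi F c x v else 0)"
  define q where "q = (\<chi> v. if v \<in> U c then x $ (c, v) else 0)"
  define B where "B = BSK S U phi x"
  have mass: "(\<Sum>s\<in>S c. B $ (c, s, v)) = x $ (c, v)" if "v \<in> U c" for v
    using arg_cong[OF slow_part_BSK[OF x], of "\<lambda>w. w $ (c, v)"] that by (simp add: slow_part_nth B_def)
  have "pay_vec U F B c = p" unfolding pay_vec_def ssgame_def p_def B_def by simp
  moreover have "pol_vec S U B c = q" using mass by (simp add: pol_vec_def pol_mass_def q_def vec_eq_iff)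
  ultimately have "(\<Sum>s\<in>S c. fr S U F rho B c s u)
      = (\<Sum>s\<in>S c. \<Sum>u'\<in>U c. B $ (c, s, u') * rho c p q u' u) - (\<Sum>s\<in>S c. B $ (c, s, u)) * (\<Sum>u'\<in>U c. rho c p q u u')"
    by (simp add: fr_def sum_subtractf sum_distrib_right)
  also have "\<dots> = (\<Sum>u'\<in>U c. (\<Sum>s\<in>S c. B $ (c, s, u')) * rho c p q u' u) - (\<Sum>s\<in>S c. B $ (c, s, u)) * (\<Sum>u'\<in>U c. rho c p q u u')"
    by (subst sum.swap) (simp add: sum_distrib_right)
  also have "\<dots> = gred S U phi F rho x $ (c, u)"
    using u mass by (simp add: gred_def p_def q_def Let_def)
  finally show ?thesis by (simp add: B_def)
qed

lemma popX_component_le: "\<mu> \<in> popX S U m \<Longrightarrow> \<bar>\<mu> $ (c, s, u)\<bar> \<le> m c"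
proof -
  assume \<mu>: "\<mu> \<in> popX S U m"
  have "\<mu> $ (c, s, u) \<le> (\<Sum>s\<in>S c. \<Sum>u\<in>U c. \<mu> $ (c, s, u))" if "s \<in> S c" "u \<in> U c"
    using \<mu> that
    by (intro order_trans[OF member_le_sum[of u "U c"] member_le_sum[of s "S c"]])
      (auto simp: popX_def intro!: sum_nonneg)
  then show ?thesis
    using \<mu> m_pos[of c] by (cases "s \<in> S c \<and> u \<in> U c") (auto simp: popX_def less_imp_le)
qed

lemma compact_popX: "compact (popX S U m)"
proof -
  have "closed (popX S U m)"
    unfolding popX_def
    by (intro closed_Collect_conj closed_Collect_all closed_Collect_imp open_Collect_const
        closed_Collect_eq closed_Collect_le continuous_intros)
  moreover have "bounded (popX S U m)"
  proof (rule bounded_if_components_bounded[of _ "Max (range m)"])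
    fix \<mu> and i :: "'c \<times> 's \<times> ('s \<Rightarrow> 'a)" assume "\<mu> \<in> popX S U m"
    moreover obtain c s u where "i = (c, s, u)" by (cases i)
    ultimately show "\<bar>\<mu> $ i\<bar> \<le> Max (range m)"
      using order_trans[OF popX_component_le[of \<mu> c s u] Max_ge[of "range m" "m c"]] by simp
  qed
  ultimately show ?thesis by (simp add: compact_eq_bounded_closed)
qed

lemma convex_popX: "convex (popX S U m)"
  unfolding convex_def popX_def
  by (auto simp: sum.distrib simp flip: sum_distrib_left distrib_right)

lemma compact_Dx: "compact (Dx U m)"
proof -
  have "closed (Dx U m)"
    unfolding Dx_def
    by (intro closed_Collect_conj closed_Collect_all closed_Collect_imp open_Collect_const
        closed_Collect_eq closed_Collect_le continuous_intros)
  moreover have "bounded (Dx U m)"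
  proof (rule bounded_if_components_bounded[of _ "Max (range m)"])
    fix x and i :: "'c \<times> ('s \<Rightarrow> 'a)" assume x: "x \<in> Dx U m"
    obtain c u where i: "i = (c, u)" by (cases i)
    have "x $ (c, u) \<le> m c"
      using x member_le_sum[of u "U c" "\<lambda>u. x $ (c, u)"] m_pos[of c]
      by (cases "u \<in> U c") (auto simp: Dx_def less_imp_le)
    then show "\<bar>x $ i\<bar> \<le> Max (range m)"
      using x i order_trans[OF _ Max_ge[of "range m" "m c"]] by (auto simp: Dx_def)
  qed
  ultimately show ?thesis by (simp add: compact_eq_bounded_closed)
qed

lemma convex_Dx: "convex (Dx U m)"
  unfolding convex_def Dx_def
  by (auto simp: sum.distrib simp flip: sum_distrib_left distrib_right)

end

section \<open>Lipschitz continuity of the revision field\<close>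

locale revision_model = population_model S A phi U m
  for S :: "'c::finite \<Rightarrow> 's::finite set"
    and A :: "'c \<Rightarrow> 's \<Rightarrow> 'a::finite set"
    and phi :: "'c \<Rightarrow> 's \<Rightarrow> 'a \<Rightarrow> 's \<Rightarrow> real"
    and U :: "'c \<Rightarrow> ('s \<Rightarrow> 'a) set"
    and m :: "'c \<Rightarrow> real" +
  fixes F :: "'c \<Rightarrow> ('c,'s,'a) pstate \<Rightarrow> ('s \<Rightarrow> 'a) \<Rightarrow> real"
    and rho :: "'c \<Rightarrow> real^('s \<Rightarrow> 'a) \<Rightarrow> real^('s \<Rightarrow> 'a) \<Rightarrow> ('s \<Rightarrow> 'a) \<Rightarrow> ('s \<Rightarrow> 'a) \<Rightarrow> real"
  assumes F_C1: "\<exists>G. open G \<and> popX S U m \<subseteq> G \<and> (\<forall>c. \<forall>u\<in>U c. C1_on G (\<lambda>\<mu>. F c \<mu> u))"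
    and rho_lip: "\<And>c. \<exists>L. \<forall>u\<in>U c. \<forall>v\<in>U c.
                    L-lipschitz_on {(p, q). \<forall>i. q $ i \<ge> 0} (\<lambda>(p, q). rho c p q u v)"
begin

lemma payoff_lipschitz:
  assumes u: "u \<in> U c"
  shows "\<exists>L. L-lipschitz_on (popX S U m) (\<lambda>\<mu>. F c \<mu> u)"
proof -
  obtain G where G: "open G" "popX S U m \<subseteq> G" "C1_on G (\<lambda>\<mu>. F c \<mu> u)"
    using F_C1 u by blast
  then obtain f' where f': "\<And>x. x \<in> G \<Longrightarrow> ((\<lambda>\<mu>. F c \<mu> u) has_derivative blinfun_apply (f' x)) (at x)"
    and cont: "continuous_on G f'"
    unfolding C1_on_def by blast
  have "compact (f' ` popX S U m)"
    using compact_popX continuous_on_subset[OF cont G(2)] by (rule compact_continuous_image[rotated])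
  then obtain K where "K > 0" "\<forall>y\<in>f' ` popX S U m. norm y \<le> K"
    using compact_imp_bounded bounded_pos by metis
  then have K: "K \<ge> 0" "\<And>x. x \<in> popX S U m \<Longrightarrow> norm (f' x) \<le> K" by auto
  have "K-lipschitz_on (popX S U m) (\<lambda>\<mu>. F c \<mu> u)"
    using f' G(2) K by (intro bounded_derivative_imp_lipschitz convex_popX)
      (auto intro: has_derivative_at_withinI simp flip: norm_blinfun.rep_eq)
  then show ?thesis by blast
qed

lemma pay_vec_lipschitz: "\<exists>L. L-lipschitz_on (popX S U m) (\<lambda>\<mu>. pay_vec U F \<mu> c)"
proof -
  have "\<exists>L. \<forall>u\<in>U c. L-lipschitz_on (popX S U m) (\<lambda>\<mu>. F c \<mu> u)"
    by (rule lipschitz_on_uniform_finite) (simp_all add: payoff_lipschitz)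
  then obtain L where "\<forall>u\<in>U c. L-lipschitz_on (popX S U m) (\<lambda>\<mu>. F c \<mu> u)" ..
  then have comp: "(max L 0)-lipschitz_on (popX S U m) (\<lambda>\<mu>. if u \<in> U c then F c \<mu> u else 0)" for u
    by (cases "u \<in> U c") (auto intro: lipschitz_on_le lipschitz_on_constant[THEN lipschitz_on_le])
  show ?thesis unfolding pay_vec_def using lipschitz_on_vec_lambda[OF comp, of "\<lambda>u. u"] by blast
qed

lemma pol_vec_lipschitz: "\<exists>L. L-lipschitz_on (popX S U m) (\<lambda>\<mu>. pol_vec S U \<mu> c)"
proof -
  have "(\<Sum>s\<in>S c. 1)-lipschitz_on (popX S U m) (\<lambda>\<mu>. \<Sum>s\<in>S c. \<mu> $ (c, s, u))" for u
    by (intro lipschitz_on_sum lipschitz_on_vec_nth) simp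
  then have "(real CARD('s))-lipschitz_on (popX S U m) (\<lambda>\<mu>. \<Sum>s\<in>S c. \<mu> $ (c, s, u))" for u
    by (rule lipschitz_on_le) (simp add: card_mono)
  then have comp: "(real CARD('s))-lipschitz_on (popX S U m) (\<lambda>\<mu>. if u \<in> U c then pol_mass S \<mu> c u else 0)" for u
    by (cases "u \<in> U c") (auto simp: pol_mass_def card_mono intro: lipschitz_on_le
        lipschitz_on_constant[THEN lipschitz_on_le])
  show ?thesis unfolding pol_vec_def using lipschitz_on_vec_lambda[OF comp, of "\<lambda>u. u"] by blast
qed

lemma rho_lipschitz:
  assumes "u \<in> U c" "v \<in> U c"
  shows "\<exists>L. L-lipschitz_on (popX S U m) (\<lambda>\<mu>. rho c (pay_vec U F \<mu> c) (pol_vec S U \<mu> c) u v)"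
proof -
  obtain Lr where Lr: "Lr-lipschitz_on {(p, q). \<forall>i. q $ i \<ge> 0} (\<lambda>(p, q). rho c p q u v)"
    using rho_lip[of c] assms by blast
  obtain Lp Lq where "Lp-lipschitz_on (popX S U m) (\<lambda>\<mu>. pay_vec U F \<mu> c)"
    "Lq-lipschitz_on (popX S U m) (\<lambda>\<mu>. pol_vec S U \<mu> c)"
    using pay_vec_lipschitz pol_vec_lipschitz by blast
  then have pair: "(sqrt (Lp\<^sup>2 + Lq\<^sup>2))-lipschitz_on (popX S U m) (\<lambda>\<mu>. (pay_vec U F \<mu> c, pol_vec S U \<mu> c))"
    by (rule lipschitz_on_Pair)
  have "(\<lambda>\<mu>. (pay_vec U F \<mu> c, pol_vec S U \<mu> c)) ` popX S U m \<subseteq> {(p, q). \<forall>i. q $ i \<ge> 0}"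
    by (auto simp: pol_vec_def pol_mass_def popX_def intro!: sum_nonneg)
  then show ?thesis
    using lipschitz_on_compose2[OF pair lipschitz_on_subset[OF Lr]] by auto
qed

lemma fr_lipschitz:
  "\<exists>L. \<forall>c s u. u \<in> U c \<longrightarrow> L-lipschitz_on (popX S U m) (\<lambda>\<mu>. fr S U F rho \<mu> c s u)"
proof -
  let ?X = "popX S U m" and ?r = "\<lambda>c u v \<mu>. rho c (pay_vec U F \<mu> c) (pol_vec S U \<mu> c) u v"
  have coord_times: "\<exists>L. L-lipschitz_on ?X (\<lambda>\<mu>. \<mu> $ i * g \<mu>)"
    if "\<exists>L. L-lipschitz_on ?X g" for i g
    using that lipschitz_on_mult_compact[OF compact_popX lipschitz_on_vec_nth] by blast
  have "\<exists>L. L-lipschitz_on ?X (\<lambda>\<mu>. fr S U F rho \<mu> c s u)" if u: "u \<in> U c" for c s u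
  proof -
    have "\<exists>L. L-lipschitz_on ?X (\<lambda>\<mu>. \<Sum>u'\<in>U c. \<mu> $ (c, s, u') * ?r c u' u \<mu>)"
      using u by (intro lipschitz_on_sum_ex coord_times rho_lipschitz) simp_all
    moreover have "\<exists>L. L-lipschitz_on ?X (\<lambda>\<mu>. \<mu> $ (c, s, u) * (\<Sum>u'\<in>U c. ?r c u u' \<mu>))"
      using u by (intro lipschitz_on_sum_ex coord_times rho_lipschitz) simp_all
    ultimately obtain L1 L2
      where L1: "L1-lipschitz_on ?X (\<lambda>\<mu>. \<Sum>u'\<in>U c. \<mu> $ (c, s, u') * ?r c u' u \<mu>)"
        and L2: "L2-lipschitz_on ?X (\<lambda>\<mu>. \<mu> $ (c, s, u) * (\<Sum>u'\<in>U c. ?r c u u' \<mu>))"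
      by blast
    show ?thesis unfolding fr_def using lipschitz_on_diff[OF L1 L2] by blast
  qed
  then have "\<exists>L. \<forall>i\<in>{(c, s, u). u \<in> U c}.
      L-lipschitz_on ?X (\<lambda>\<mu>. case i of (c, s, u) \<Rightarrow> fr S U F rho \<mu> c s u)"
    by (intro lipschitz_on_uniform_finite) auto
  then show ?thesis by auto
qed

definition revision_field :: "('c,'s,'a) pstate \<Rightarrow> ('c,'s,'a) pstate" where
  "revision_field \<mu> = (\<chi> i. case i of (c, s, u) \<Rightarrow>
      if s \<in> S c \<and> u \<in> U c then fr S U F rho \<mu> c s u else 0)"

lemma revision_field_lipschitz: "\<exists>L. L-lipschitz_on (popX S U m) revision_field"
proof -
  obtain L where L: "\<And>c s u. u \<in> U c \<Longrightarrow> L-lipschitz_on (popX S U m) (\<lambda>\<mu>. fr S U F rho \<mu> c s u)"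
    using fr_lipschitz by blast
  then have "(max L 0)-lipschitz_on (popX S U m)
      (\<lambda>\<mu>. if s \<in> S c \<and> u \<in> U c then fr S U F rho \<mu> c s u else 0)" for c s u
    by (cases "s \<in> S c \<and> u \<in> U c") (auto intro: lipschitz_on_le[OF L] lipschitz_onI)
  then have "(max L 0)-lipschitz_on (popX S U m) (\<lambda>\<mu>. case i of (c, s, u) \<Rightarrow>
      if s \<in> S c \<and> u \<in> U c then fr S U F rho \<mu> c s u else 0)" for i
    by (cases i) simp
  from lipschitz_on_vec_lambda[OF this, of "\<lambda>i. i"] show ?thesis
    unfolding revision_field_def by blast
qed

end

section \<open>An energy functional for the fast variable\<close>

text \<open>Per class and policy, the fast dynamics is \<open>z' = 2R (zA - z) + h\<close> with A the lazy
  version of the policy's kernel. Summing |z A^k|^2 over k below a time N at which A^N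
  halves zero-sum vectors gives a quadratic form that decreases at rate R along it,
  up to the forcing h.\<close>

context population_model
begin

abbreviation lazy_step_of :: "'c \<Rightarrow> ('s \<Rightarrow> 'a) \<Rightarrow> ('s \<Rightarrow> real) \<Rightarrow> 's \<Rightarrow> real" where
  "lazy_step_of c u \<equiv> unichain.lazy_step (S c) (kern phi c u)"

abbreviation lazy_iter_of :: "'c \<Rightarrow> ('s \<Rightarrow> 'a) \<Rightarrow> nat \<Rightarrow> ('s \<Rightarrow> real) \<Rightarrow> 's \<Rightarrow> real" where
  "lazy_iter_of c u \<equiv> unichain.lazy_iter (S c) (kern phi c u)"

definition block :: "('c,'s,'a) pstate \<Rightarrow> 'c \<Rightarrow> ('s \<Rightarrow> 'a) \<Rightarrow> 's \<Rightarrow> real" where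
  "block z c u = (\<lambda>s. z $ (c, s, u))"

definition halving_time :: "'c \<Rightarrow> ('s \<Rightarrow> 'a) \<Rightarrow> nat" where
  "halving_time c u = (SOME N. N \<ge> 1 \<and> (\<forall>w. (\<Sum>s\<in>S c. w s) = 0 \<longrightarrow>
     (\<Sum>t\<in>S c. (lazy_iter_of c u N w t)\<^sup>2) \<le> 1/4 * (\<Sum>s\<in>S c. (w s)\<^sup>2)))"

definition fast_energy :: "('c,'s,'a) pstate \<Rightarrow> real" where
  "fast_energy z = (\<Sum>c\<in>UNIV. \<Sum>u\<in>U c. \<Sum>k<halving_time c u. \<Sum>t\<in>S c.
      (lazy_iter_of c u k (block z c u) t)\<^sup>2)"

definition fast_energy_deriv :: "('c,'s,'a) pstate \<Rightarrow> ('c,'s,'a) pstate \<Rightarrow> real" where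
  "fast_energy_deriv z w = (\<Sum>c\<in>UNIV. \<Sum>u\<in>U c. \<Sum>k<halving_time c u. \<Sum>t\<in>S c.
      2 * lazy_iter_of c u k (block z c u) t * lazy_iter_of c u k (block w c u) t)"

definition supp_sq :: "('c,'s,'a) pstate \<Rightarrow> real" where
  "supp_sq z = (\<Sum>c\<in>UNIV. \<Sum>u\<in>U c. \<Sum>s\<in>S c. (z $ (c, s, u))\<^sup>2)"

definition energy_const :: real where
  "energy_const = (\<Sum>c\<in>UNIV. \<Sum>u\<in>U c. real (halving_time c u) * real (card (S c)))"

definition fast_drift :: "('c \<Rightarrow> real) \<Rightarrow> ('c,'s,'a) pstate \<Rightarrow> ('c,'s,'a) pstate" where
  "fast_drift R z = (\<chi> i. case i of (c, s, u) \<Rightarrow> if s \<in> S c \<and> u \<in> U c then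
      2 * R c * (lazy_step_of c u (block z c u) s - z $ (c, s, u)) else 0)"

lemma halving_time:
  assumes "u \<in> U c"
  shows "halving_time c u \<ge> 1"
    and "(\<Sum>s\<in>S c. w s) = 0 \<Longrightarrow>
      (\<Sum>t\<in>S c. (lazy_iter_of c u (halving_time c u) w t)\<^sup>2) \<le> 1/4 * (\<Sum>s\<in>S c. (w s)\<^sup>2)"
  using someI_ex[OF unichain.lazy_iter_l2_contraction[OF unichain_kern[OF assms]]]
  by (simp_all add: halving_time_def)

lemma supp_sq_nonneg: "supp_sq z \<ge> 0"
  by (simp add: supp_sq_def sum_nonneg)

lemma power2_norm_eq_supp_sq:
  assumes "\<And>c s u. \<not> (s \<in> S c \<and> u \<in> U c) \<Longrightarrow> z $ (c, s, u) = 0"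
  shows "(norm z)\<^sup>2 = supp_sq z"
proof -
  have "(norm z)\<^sup>2 = (\<Sum>i\<in>UNIV. (z $ i)\<^sup>2)"
    unfolding power2_norm_eq_inner by (simp add: inner_vec_def power2_eq_square)
  also have "\<dots> = (\<Sum>c\<in>UNIV. \<Sum>s\<in>UNIV. \<Sum>u\<in>UNIV. (z $ (c, s, u))\<^sup>2)"
    by (simp add: sum.cartesian_product flip: UNIV_Times_UNIV del: UNIV_Times_UNIV)
  also have "\<dots> = (\<Sum>c\<in>UNIV. \<Sum>s\<in>S c. \<Sum>u\<in>U c. (z $ (c, s, u))\<^sup>2)"
  proof (rule sum.cong[OF refl])
    fix c
    have "(\<Sum>s\<in>UNIV. \<Sum>u\<in>UNIV. (z $ (c, s, u))\<^sup>2) = (\<Sum>s\<in>UNIV. \<Sum>u\<in>U c. (z $ (c, s, u))\<^sup>2)"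
      using assms by (intro sum.cong refl sum.mono_neutral_right) auto
    also have "\<dots> = (\<Sum>s\<in>S c. \<Sum>u\<in>U c. (z $ (c, s, u))\<^sup>2)"
      using assms by (intro sum.mono_neutral_right) (auto intro!: sum.neutral)
    finally show "(\<Sum>s\<in>UNIV. \<Sum>u\<in>UNIV. (z $ (c, s, u))\<^sup>2) = \<dots>" .
  qed
  also have "\<dots> = supp_sq z"
    unfolding supp_sq_def by (intro sum.cong refl) (rule sum.swap)
  finally show ?thesis .
qed

lemma power2_norm_fast_part: "\<mu> \<in> popX S U m \<Longrightarrow> (norm (fast_part \<mu>))\<^sup>2 = supp_sq (fast_part \<mu>)"
  by (rule power2_norm_eq_supp_sq) (rule fast_part_outside)

lemma supp_sq_le_fast_energy: "supp_sq z \<le> fast_energy z"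
  unfolding supp_sq_def fast_energy_def
proof (intro sum_mono)
  fix c u assume u: "u \<in> U c"
  have "(\<Sum>s\<in>S c. (z $ (c, s, u))\<^sup>2) = (\<Sum>t\<in>S c. (lazy_iter_of c u 0 (block z c u) t)\<^sup>2)"
    by (simp add: unichain.lazy_iter_0[OF unichain_kern[OF u]] block_def)
  also have "\<dots> \<le> (\<Sum>k<halving_time c u. \<Sum>t\<in>S c. (lazy_iter_of c u k (block z c u) t)\<^sup>2)"
    using halving_time(1)[OF u] by (intro member_le_sum) (auto intro: sum_nonneg)
  finally show "(\<Sum>s\<in>S c. (z $ (c, s, u))\<^sup>2) \<le> \<dots>" .
qed

lemma fast_energy_nonneg: "fast_energy z \<ge> 0"
  using supp_sq_le_fast_energy supp_sq_nonneg order_trans by blast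

lemma block_le_supp_sq:
  assumes "u \<in> U c"
  shows "(\<Sum>s\<in>S c. (block z c u s)\<^sup>2) \<le> supp_sq z"
proof -
  have "(\<Sum>s\<in>S c. (block z c u s)\<^sup>2) \<le> (\<Sum>u\<in>U c. \<Sum>s\<in>S c. (z $ (c, s, u))\<^sup>2)"
    using member_le_sum[OF assms, of "\<lambda>u. \<Sum>s\<in>S c. (z $ (c, s, u))\<^sup>2"]
    by (simp add: block_def sum_nonneg)
  also have "\<dots> \<le> supp_sq z"
    unfolding supp_sq_def by (intro member_le_sum) (auto intro!: sum_nonneg)
  finally show ?thesis .
qed

lemma fast_energy_le: "fast_energy z \<le> energy_const * supp_sq z"
proof -
  have "(\<Sum>k<halving_time c u. \<Sum>t\<in>S c. (lazy_iter_of c u k (block z c u) t)\<^sup>2)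
      \<le> real (halving_time c u) * real (card (S c)) * supp_sq z" if u: "u \<in> U c" for c u
  proof -
    have "(\<Sum>t\<in>S c. (lazy_iter_of c u k (block z c u) t)\<^sup>2) \<le> real (card (S c)) * supp_sq z" for k
      using unichain.sum_power2_lazy_iter_le[OF unichain_kern[OF u]] block_le_supp_sq[OF u]
      by (meson mult_left_mono of_nat_0_le_iff order_trans)
    then have "(\<Sum>k<halving_time c u. \<Sum>t\<in>S c. (lazy_iter_of c u k (block z c u) t)\<^sup>2)
        \<le> (\<Sum>k<halving_time c u. real (card (S c)) * supp_sq z)"
      by (intro sum_mono)
    then show ?thesis by (simp add: mult.assoc)
  qed
  then have "fast_energy z \<le> (\<Sum>c\<in>UNIV. \<Sum>u\<in>U c. real (halving_time c u) * real (card (S c)) * supp_sq z)"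
    unfolding fast_energy_def by (intro sum_mono) auto
  then show ?thesis by (simp add: energy_const_def sum_distrib_right)
qed

lemma block_weight_le_energy_const:
  assumes "u \<in> U c"
  shows "real (halving_time c u) * real (card (S c)) \<le> energy_const"
proof -
  have "real (halving_time c u) * real (card (S c))
      \<le> (\<Sum>u\<in>U c. real (halving_time c u) * real (card (S c)))"
    using assms by (intro member_le_sum) auto
  also have "\<dots> \<le> energy_const"
    unfolding energy_const_def by (intro member_le_sum) (auto intro!: sum_nonneg)
  finally show ?thesis .
qed

lemma energy_const_pos: "energy_const > 0"
proof -
  obtain c :: 'c where True by simp
  obtain u where u: "u \<in> U c" using U_ne by blast
  have "0 < real (halving_time c u) * real (card (S c))"
    using halving_time(1)[OF u] S_ne[of c] by (simp add: card_gt_0_iff)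
  then show ?thesis using block_weight_le_energy_const[OF u] by linarith
qed

lemma lazy_step_of_eq:
  assumes "u \<in> U c" "s \<in> S c"
  shows "lazy_step_of c u w s = (w s + (\<Sum>r\<in>S c. w r * phi c r (u r) s)) / 2"
proof -
  interpret unichain "S c" "kern phi c u" by (rule unichain_kern[OF assms(1)])
  have "lazy_step w s = (\<Sum>r\<in>S c. w r * (((if r = s then 1 else 0) + kern phi c u r s) / 2))"
    unfolding lazy_step_def lazy_def ..
  also have "\<dots> = ((\<Sum>r\<in>S c. w r * (if r = s then 1 else 0)) + (\<Sum>r\<in>S c. w r * kern phi c u r s)) / 2"
    by (simp add: sum_divide_distrib[symmetric] sum.distrib[symmetric] distrib_left)
  finally show ?thesis using assms by (simp add: kern_def if_distrib cong: if_cong)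
qed

lemma fd_eq_fast_drift:
  assumes "s \<in> S c" "u \<in> U c"
  shows "fd S phi R \<mu> c s u = fast_drift R (fast_part \<mu>) $ (c, s, u)"
proof -
  define x where "x = (\<Sum>s'\<in>S c. \<mu> $ (c, s', u))"
  have \<mu>: "\<mu> $ (c, s', u) = fast_part \<mu> $ (c, s', u) + x * eta S phi c u s'" if "s' \<in> S c" for s'
    using that assms by (simp add: fast_part_nth x_def)
  have "(\<Sum>s'\<in>S c. phi c s' (u s') s * \<mu> $ (c, s', u))
      = (\<Sum>s'\<in>S c. fast_part \<mu> $ (c, s', u) * phi c s' (u s') s)
        + x * (\<Sum>s'\<in>S c. eta S phi c u s' * phi c s' (u s') s)"
    by (simp add: \<mu> sum.distrib sum_distrib_left algebra_simps cong: sum.cong)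
  then show ?thesis
    using assms \<mu>[OF assms(1)]
    by (simp add: fd_def fast_drift_def lazy_step_of_eq[OF assms(2,1)] block_def eta_balance algebra_simps)
qed

lemma lazy_iter_of_fast_drift:
  assumes u: "u \<in> U c" and t: "t \<in> S c"
  shows "lazy_iter_of c u k (block (fast_drift R z + h) c u) t
    = 2 * R c * (lazy_iter_of c u (Suc k) (block z c u) t - lazy_iter_of c u k (block z c u) t)
      + lazy_iter_of c u k (block h c u) t"
proof -
  interpret unichain "S c" "kern phi c u" by (rule unichain_kern[OF u])
  have "lazy_iter k (block (fast_drift R z + h) c u) t
      = (\<Sum>s\<in>S c. (2 * R c * (lazy_step (block z c u) s - block z c u s) + block h c u s) * lazy_pow k s t)"
    using u t by (intro trans[OF lazy_iter_eq_sum sum.cong]) (auto simp: fast_drift_def block_def)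
  also have "\<dots> = 2 * R c * (lazy_iter k (lazy_step (block z c u)) t - lazy_iter k (block z c u) t)
      + lazy_iter k (block h c u) t"
    using t by (simp add: lazy_iter_eq_sum algebra_simps sum.distrib sum_subtractf sum_distrib_left)
  finally show ?thesis by (simp add: lazy_iter_Suc)
qed

lemma fast_energy_deriv_le:
  assumes R: "\<And>c. R c \<ge> r" and r: "r \<ge> 0" and \<eta>: "\<eta> > 0"
    and z: "\<And>c u. u \<in> U c \<Longrightarrow> (\<Sum>s\<in>S c. z $ (c, s, u)) = 0"
  shows "fast_energy_deriv z (fast_drift R z + h)
    \<le> - (3/2) * r * supp_sq z + energy_const * (\<eta> * supp_sq z + supp_sq h / \<eta>)"
proof -
  define Z where "Z c u = (\<Sum>s\<in>S c. (block z c u s)\<^sup>2)" for c u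
  define H where "H c u = (\<Sum>s\<in>S c. (block h c u s)\<^sup>2)" for c u
  have ZH: "Z c u \<ge> 0" "H c u \<ge> 0" for c u by (auto simp: Z_def H_def intro: sum_nonneg)
  have block_term: "(\<Sum>k<halving_time c u. \<Sum>t\<in>S c.
        2 * lazy_iter_of c u k (block z c u) t * lazy_iter_of c u k (block (fast_drift R z + h) c u) t)
      \<le> - (3/2) * r * Z c u + energy_const * (\<eta> * Z c u + H c u / \<eta>)" if u: "u \<in> U c" for c u
  proof -
    have "(\<Sum>k<halving_time c u. \<Sum>t\<in>S c.
          2 * lazy_iter_of c u k (block z c u) t * lazy_iter_of c u k (block (fast_drift R z + h) c u) t)
      = (\<Sum>k<halving_time c u. \<Sum>t\<in>S c. 2 * lazy_iter_of c u k (block z c u) t *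
          (2 * R c * (lazy_iter_of c u (Suc k) (block z c u) t - lazy_iter_of c u k (block z c u) t)
            + lazy_iter_of c u k (block h c u) t))"
      by (intro sum.cong refl) (simp add: lazy_iter_of_fast_drift[OF u])
    also have "\<dots> \<le> - (3/2) * R c * Z c u
        + real (halving_time c u) * real (card (S c)) * (\<eta> * Z c u + H c u / \<eta>)"
      unfolding Z_def H_def
      by (rule unichain.lazy_energy_dissipation[OF unichain_kern[OF u] halving_time(2)[OF u]])
        (use z[OF u] R[of c] r \<eta> in \<open>auto simp: block_def\<close>)
    also have "\<dots> \<le> - (3/2) * r * Z c u + energy_const * (\<eta> * Z c u + H c u / \<eta>)"
      using block_weight_le_energy_const[OF u] R[of c] ZH \<eta>
      by (intro add_mono mult_right_mono) auto
    finally show ?thesis .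
  qed
  have "fast_energy_deriv z (fast_drift R z + h)
      \<le> (\<Sum>c\<in>UNIV. \<Sum>u\<in>U c. - (3/2) * r * Z c u + energy_const * (\<eta> * Z c u + H c u / \<eta>))"
    unfolding fast_energy_deriv_def by (intro sum_mono block_term)
  also have "\<dots> = - (3/2) * r * supp_sq z + energy_const * (\<eta> * supp_sq z + supp_sq h / \<eta>)"
    by (simp add: Z_def H_def supp_sq_def block_def sum.distrib sum_subtractf sum_distrib_left
        sum_divide_distrib distrib_left)
  finally show ?thesis .
qed

lemma fast_energy_has_derivative:
  assumes z: "(z has_vector_derivative z') (at t within T)"
  shows "((\<lambda>\<tau>. fast_energy (z \<tau>)) has_real_derivative fast_energy_deriv (z t) z') (at t within T)"
proof -
  have coord: "((\<lambda>\<tau>. z \<tau> $ i) has_real_derivative z' $ i) (at t within T)" for i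
    using bounded_linear.has_vector_derivative[OF bounded_linear_vec_nth z]
    by (simp add: has_real_derivative_iff_has_vector_derivative)
  have iter: "((\<lambda>\<tau>. lazy_iter_of c u k (block (z \<tau>) c u) r)
      has_real_derivative lazy_iter_of c u k (block z' c u) r) (at t within T)"
    if "u \<in> U c" "r \<in> S c" for c u k r
    using that coord
    by (simp add: unichain.lazy_iter_eq_sum[OF unichain_kern] block_def)
      (intro DERIV_sum DERIV_cmult_right)
  show ?thesis
    unfolding fast_energy_def fast_energy_deriv_def
    by (intro DERIV_sum) (auto intro!: derivative_eq_intros iter)
qed

end

context revision_model
begin

lemma slow_part_Efield_eq: "slow_part (Efield S U phi R F rho \<mu>) = slow_part (revision_field \<mu>)"
proof -
  have "slow_part (revision_field \<mu>) $ (c, u) = (if u \<in> U c then (\<Sum>s\<in>S c. fr S U F rho \<mu> c s u) else 0)"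
    for c u by (simp add: slow_part_nth revision_field_def)
  then show ?thesis by (simp add: vec_eq_iff split_paired_All slow_part_Efield)
qed

lemma fast_part_Efield:
  "fast_part (Efield S U phi R F rho \<mu>) = fast_drift R (fast_part \<mu>) + fast_part (revision_field \<mu>)"
proof -
  have "fast_part (Efield S U phi R F rho \<mu>) $ (c, s, u)
      = fast_drift R (fast_part \<mu>) $ (c, s, u) + fast_part (revision_field \<mu>) $ (c, s, u)" for c s u
  proof (cases "s \<in> S c \<and> u \<in> U c")
    case True
    have "(\<Sum>s'\<in>S c. Efield S U phi R F rho \<mu> $ (c, s', u)) = (\<Sum>s'\<in>S c. revision_field \<mu> $ (c, s', u))"
      using arg_cong[OF slow_part_Efield_eq, of "\<lambda>x. x $ (c, u)"] True by (simp add: slow_part_nth)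
    then show ?thesis
      using True by (simp add: fast_part_nth Efield_def revision_field_def fd_eq_fast_drift)
  next
    case False
    then show ?thesis by (auto simp: fast_part_nth Efield_def revision_field_def fast_drift_def)
  qed
  then show ?thesis by (simp add: vec_eq_iff)
qed

lemma gred_eq_slow_part:
  assumes "x \<in> Dx U m"
  shows "gred S U phi F rho x = slow_part (revision_field (BSK S U phi x))"
proof -
  have "gred S U phi F rho x $ (c, u) = slow_part (revision_field (BSK S U phi x)) $ (c, u)" for c u
    by (cases "u \<in> U c")
      (simp add: gred_eq_sum_fr[OF assms] slow_part_nth revision_field_def,
       simp add: gred_def slow_part_nth)
  then show ?thesis by (simp add: vec_eq_iff split_paired_All)
qed


end

section \<open>The singularly perturbed system near the equilibria\<close>

locale two_time_scale_model = revision_model S A phi U m F rho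
  for S :: "'c::finite \<Rightarrow> 's::finite set"
    and A :: "'c \<Rightarrow> 's \<Rightarrow> 'a::finite set"
    and phi :: "'c \<Rightarrow> 's \<Rightarrow> 'a \<Rightarrow> 's \<Rightarrow> real"
    and U :: "'c \<Rightarrow> ('s \<Rightarrow> 'a) set"
    and m :: "'c \<Rightarrow> real"
    and F :: "'c \<Rightarrow> ('c,'s,'a) pstate \<Rightarrow> ('s \<Rightarrow> 'a) \<Rightarrow> real"
    and rho :: "'c \<Rightarrow> real^('s \<Rightarrow> 'a) \<Rightarrow> real^('s \<Rightarrow> 'a) \<Rightarrow> ('s \<Rightarrow> 'a) \<Rightarrow> ('s \<Rightarrow> 'a) \<Rightarrow> real" +
  fixes MF :: "('c,'s,'a) pdist set"
    and Dbar :: "('c,'s,'a) pdist set"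
    and V :: "('c,'s,'a) pdist \<Rightarrow> real"
    and V' :: "('c,'s,'a) pdist \<Rightarrow> ('c,'s,'a) pdist \<Rightarrow>\<^sub>L real"
    and \<gamma>1 \<gamma>2 :: real
  assumes MF_ne: "MF \<noteq> {}"
    and MF_closed: "closed MF"
    and MF_NE: "MF \<subseteq> NE_ss S U m phi F"
    and fr_MSNE: "\<And>\<mu> c s u. \<mu> \<in> MSNE S U m phi F \<Longrightarrow> s \<in> S c \<Longrightarrow> u \<in> U c \<Longrightarrow> fr S U F rho \<mu> c s u = 0"
    and Dbar_nbhd: "\<exists>W. open W \<and> MF \<subseteq> W \<and> W \<inter> Dx U m \<subseteq> Dbar"
    and V_C1: "\<exists>G. open G \<and> Dbar \<subseteq> G \<and>
                 (\<forall>x\<in>G. (V has_derivative blinfun_apply (V' x)) (at x)) \<and> continuous_on G V'"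
    and V_nonneg: "\<And>x. x \<in> Dbar \<Longrightarrow> V x \<ge> 0"
    and V_pos: "\<And>x. x \<in> Dbar - MF \<Longrightarrow> V x > 0"
    and V_zero: "\<And>x. x \<in> MF \<Longrightarrow> V x = 0"
    and \<gamma>1_pos: "\<gamma>1 > 0" and \<gamma>2_pos: "\<gamma>2 > 0"
    and V_decr: "\<And>x. x \<in> Dbar \<Longrightarrow> V' x (gred S U phi F rho x) \<le> - \<gamma>1 * (infdist x MF)\<^sup>2"
    and V_grad: "\<And>x. x \<in> Dbar \<Longrightarrow> norm (V' x) \<le> \<gamma>2 * infdist x MF"
begin

abbreviation M :: "('c,'s,'a) pstate set" where
  "M \<equiv> BSK S U phi ` MF"

lemma MF_Dx: "MF \<subseteq> Dx U m"
  using MF_NE by (auto simp: NE_ss_def)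

lemma compact_MF: "compact MF"
  using compact_Dx MF_Dx MF_closed by (metis compact_Int_closed inf.absorb_iff2)

lemma closed_M: "closed M"
  using compact_MF linear_continuous_on[OF linear_BSK[unfolded linear_conv_bounded_linear]]
  by (intro compact_imp_closed compact_continuous_image)

lemma M_popX: "M \<subseteq> popX S U m"
  using MF_Dx BSK_mem_popX by auto

lemma revision_field_M: "\<mu> \<in> M \<Longrightarrow> revision_field \<mu> = 0"
  using MF_NE BSK_mem_MSNE fr_MSNE by (auto simp: vec_eq_iff revision_field_def)

lemma V_has_derivative: "x \<in> Dbar \<Longrightarrow> (V has_derivative blinfun_apply (V' x)) (at x)"
  using V_C1 by blast

lemma nearest_in_MF: obtains y where "y \<in> MF" "infdist x MF = dist x y"
  using infdist_attains_inf[OF MF_closed MF_ne] by blast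

lemma nearest_in_M: obtains y where "y \<in> MF" "infdist \<mu> M = dist \<mu> (BSK S U phi y)"
  using infdist_attains_inf[OF closed_M] MF_ne by blast

lemma bounded_linear_slow_part: "bounded_linear slow_part"
  using linear_slow_part by (simp add: linear_conv_bounded_linear)

lemma bounded_linear_fast_part: "bounded_linear fast_part"
  using linear_fast_part by (simp add: linear_conv_bounded_linear)

text \<open>The slow part of (E) deviates from (R) by the Lipschitz variation of the revision
  field between \<mu> and its projection onto the slow manifold, i.e. by the fast part.\<close>

lemma slow_drift_error:
  "\<exists>L\<ge>0. \<forall>R. \<forall>\<mu>\<in>popX S U m.
     norm (slow_part (Efield S U phi R F rho \<mu>) - gred S U phi F rho (slow_part \<mu>)) \<le> L * norm (fast_part \<mu>)"
proof -
  obtain Lr where Lr: "Lr-lipschitz_on (popX S U m) revision_field"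
    using revision_field_lipschitz by blast
  obtain C where C: "C > 0" "\<And>v. norm (slow_part v) \<le> C * norm v"
    using bounded_linear.pos_bounded[OF bounded_linear_slow_part] by (auto simp: mult.commute)
  have "norm (slow_part (Efield S U phi R F rho \<mu>) - gred S U phi F rho (slow_part \<mu>))
      \<le> C * Lr * norm (fast_part \<mu>)" if \<mu>: "\<mu> \<in> popX S U m" for R \<mu>
  proof -
    define \<nu> where "\<nu> = BSK S U phi (slow_part \<mu>)"
    have \<nu>: "\<nu> \<in> popX S U m" using BSK_mem_popX slow_part_mem_Dx \<mu> by (simp add: \<nu>_def)
    have "slow_part (Efield S U phi R F rho \<mu>) - gred S U phi F rho (slow_part \<mu>)
        = slow_part (revision_field \<mu> - revision_field \<nu>)"
      using \<mu> by (simp add: slow_part_Efield_eq gred_eq_slow_part slow_part_mem_Dx linear_diff[OF linear_slow_part] \<nu>_def)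
    also have "norm \<dots> \<le> C * (Lr * norm (\<mu> - \<nu>))"
      using C(2) lipschitz_on_normD[OF Lr \<mu> \<nu>] C(1) by (meson mult_left_mono less_imp_le order_trans)
    finally show ?thesis by (simp add: fast_part_def \<nu>_def mult.assoc)
  qed
  then show ?thesis using C(1) lipschitz_on_nonneg[OF Lr] by (intro exI[of _ "C * Lr"]) auto
qed

lemma fast_forcing_bound:
  "\<exists>L\<ge>0. \<forall>\<mu>\<in>popX S U m. norm (fast_part (revision_field \<mu>)) \<le> L * infdist \<mu> M"
proof -
  obtain Lr where Lr: "Lr-lipschitz_on (popX S U m) revision_field"
    using revision_field_lipschitz by blast
  obtain C where C: "C > 0" "\<And>v. norm (fast_part v) \<le> C * norm v"
    using bounded_linear.pos_bounded[OF bounded_linear_fast_part] by (auto simp: mult.commute)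
  have "norm (fast_part (revision_field \<mu>)) \<le> C * Lr * infdist \<mu> M" if \<mu>: "\<mu> \<in> popX S U m" for \<mu>
  proof -
    obtain y where y: "y \<in> MF" "infdist \<mu> M = dist \<mu> (BSK S U phi y)" by (rule nearest_in_M)
    have yX: "BSK S U phi y \<in> popX S U m" using y M_popX by auto
    have "fast_part (revision_field \<mu>) = fast_part (revision_field \<mu> - revision_field (BSK S U phi y))"
      using y revision_field_M by simp
    also have "norm \<dots> \<le> C * (Lr * norm (\<mu> - BSK S U phi y))"
      using C(2) lipschitz_on_normD[OF Lr \<mu> yX] C(1) by (meson mult_left_mono less_imp_le order_trans)
    finally show ?thesis using y by (simp add: dist_norm mult.assoc)
  qed
  then show ?thesis using C(1) lipschitz_on_nonneg[OF Lr] by (intro exI[of _ "C * Lr"]) auto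
qed

lemma infdist_M_le:
  "\<exists>B\<ge>0. \<forall>\<mu>\<in>popX S U m. infdist \<mu> M \<le> norm (fast_part \<mu>) + B * infdist (slow_part \<mu>) MF"
proof -
  obtain B where B: "B > 0" "\<And>v. norm (BSK S U phi v) \<le> B * norm v"
    using bounded_linear.pos_bounded[OF linear_BSK[unfolded linear_conv_bounded_linear]]
    by (auto simp: mult.commute)
  have "infdist \<mu> M \<le> norm (fast_part \<mu>) + B * infdist (slow_part \<mu>) MF" for \<mu>
  proof -
    obtain y where y: "y \<in> MF" "infdist (slow_part \<mu>) MF = dist (slow_part \<mu>) y" by (rule nearest_in_MF)
    have "infdist \<mu> M \<le> dist \<mu> (BSK S U phi y)" using y by (intro infdist_le) auto
    also have "\<mu> - BSK S U phi y = fast_part \<mu> + BSK S U phi (slow_part \<mu> - y)"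
      by (simp add: fast_part_def linear_diff[OF linear_BSK])
    then have "dist \<mu> (BSK S U phi y) \<le> norm (fast_part \<mu>) + norm (BSK S U phi (slow_part \<mu> - y))"
      by (simp add: dist_norm norm_triangle_ineq)
    also have "\<dots> \<le> norm (fast_part \<mu>) + B * infdist (slow_part \<mu>) MF"
      using B(2)[of "slow_part \<mu> - y"] y by (simp add: dist_norm)
    finally show ?thesis .
  qed
  then show ?thesis using B(1) by (intro exI[of _ B]) auto
qed

lemma slow_fast_le_infdist_M:
  "\<exists>C>0. \<forall>\<mu>. infdist (slow_part \<mu>) MF \<le> C * infdist \<mu> M \<and> norm (fast_part \<mu>) \<le> C * infdist \<mu> M"
proof -
  obtain Cx where Cx: "Cx > 0" "\<And>v. norm (slow_part v) \<le> Cx * norm v"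
    using bounded_linear.pos_bounded[OF bounded_linear_slow_part] by (auto simp: mult.commute)
  obtain Cz where Cz: "\<And>v. norm (fast_part v) \<le> Cz * norm v"
    using bounded_linear.pos_bounded[OF bounded_linear_fast_part] by (auto simp: mult.commute)
  have "infdist (slow_part \<mu>) MF \<le> max Cx Cz * infdist \<mu> M \<and> norm (fast_part \<mu>) \<le> max Cx Cz * infdist \<mu> M"
    for \<mu>
  proof -
    obtain y where y: "y \<in> MF" "infdist \<mu> M = dist \<mu> (BSK S U phi y)" by (rule nearest_in_M)
    have yD: "y \<in> Dx U m" using y MF_Dx by auto
    have "infdist (slow_part \<mu>) MF \<le> dist (slow_part \<mu>) y" using y by (intro infdist_le)
    also have "\<dots> = norm (slow_part (\<mu> - BSK S U phi y))"
      by (simp add: dist_norm linear_diff[OF linear_slow_part] slow_part_BSK[OF yD])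
    also have "\<dots> \<le> Cx * infdist \<mu> M" using Cx(2) y by (simp add: dist_norm)
    finally have slow: "infdist (slow_part \<mu>) MF \<le> Cx * infdist \<mu> M" .
    have "norm (fast_part \<mu>) = norm (fast_part (\<mu> - BSK S U phi y))"
      by (simp add: linear_diff[OF linear_fast_part] fast_part_BSK[OF yD])
    also have "\<dots> \<le> Cz * infdist \<mu> M" using Cz y by (simp add: dist_norm)
    finally show ?thesis
      using slow infdist_nonneg[of \<mu> M]
      by (meson max.cobounded1 max.cobounded2 mult_right_mono order_trans)
  qed
  then show ?thesis using Cx(1) by (intro exI[of _ "max Cx Cz"]) auto
qed

definition lyap :: "('c,'s,'a) pstate \<Rightarrow> real" where
  "lyap \<mu> = V (slow_part \<mu>) + fast_energy (fast_part \<mu>)"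

definition lyap_deriv :: "('c \<Rightarrow> real) \<Rightarrow> ('c,'s,'a) pstate \<Rightarrow> real" where
  "lyap_deriv R \<mu> = V' (slow_part \<mu>) (slow_part (Efield S U phi R F rho \<mu>))
     + fast_energy_deriv (fast_part \<mu>) (fast_part (Efield S U phi R F rho \<mu>))"

lemma lyap_has_derivative:
  assumes traj: "(traj has_vector_derivative Efield S U phi R F rho (traj t)) (at t within T)"
    and slow: "slow_part (traj t) \<in> Dbar"
  shows "((\<lambda>\<tau>. lyap (traj \<tau>)) has_real_derivative lyap_deriv R (traj t)) (at t within T)"
proof -
  define E where "E = Efield S U phi R F rho (traj t)"
  have slow_traj: "((\<lambda>\<tau>. slow_part (traj \<tau>)) has_vector_derivative slow_part E) (at t within T)"
    using bounded_linear.has_vector_derivative[OF bounded_linear_slow_part traj] by (simp add: E_def)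
  have "((V \<circ> (\<lambda>\<tau>. slow_part (traj \<tau>))) has_derivative (\<lambda>h. V' (slow_part (traj t)) (h *\<^sub>R slow_part E)))
      (at t within T)"
    using diff_chain_within[OF slow_traj[unfolded has_vector_derivative_def]
        has_derivative_at_withinI[OF V_has_derivative[OF slow]]] by (simp add: o_def)
  moreover have "(\<lambda>h. V' (slow_part (traj t)) (h *\<^sub>R slow_part E)) = (*) (V' (slow_part (traj t)) (slow_part E))"
    by (simp add: fun_eq_iff blinfun.scaleR_right)
  ultimately have "((\<lambda>\<tau>. V (slow_part (traj \<tau>))) has_real_derivative V' (slow_part (traj t)) (slow_part E))
      (at t within T)"
    by (simp add: has_field_derivative_def o_def)
  moreover have "((\<lambda>\<tau>. fast_energy (fast_part (traj \<tau>))) has_real_derivative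
      fast_energy_deriv (fast_part (traj t)) (fast_part E)) (at t within T)"
    using bounded_linear.has_vector_derivative[OF bounded_linear_fast_part traj]
    by (intro fast_energy_has_derivative) (simp add: E_def)
  ultimately show ?thesis unfolding lyap_def lyap_deriv_def E_def by (rule DERIV_add)
qed

lemma slow_lyap_deriv_le:
  "\<exists>c\<ge>0. \<forall>R. \<forall>\<mu>\<in>popX S U m. slow_part \<mu> \<in> Dbar \<longrightarrow>
     V' (slow_part \<mu>) (slow_part (Efield S U phi R F rho \<mu>))
       \<le> - (\<gamma>1 / 2) * (infdist (slow_part \<mu>) MF)\<^sup>2 + c * (norm (fast_part \<mu>))\<^sup>2"
proof -
  obtain L where L: "L \<ge> 0" "\<And>R \<mu>. \<mu> \<in> popX S U m \<Longrightarrow>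
      norm (slow_part (Efield S U phi R F rho \<mu>) - gred S U phi F rho (slow_part \<mu>)) \<le> L * norm (fast_part \<mu>)"
    using slow_drift_error by blast
  define c where "c = (\<gamma>2 * L)\<^sup>2 / (2 * \<gamma>1)"
  have "V' (slow_part \<mu>) (slow_part (Efield S U phi R F rho \<mu>))
      \<le> - (\<gamma>1 / 2) * (infdist (slow_part \<mu>) MF)\<^sup>2 + c * (norm (fast_part \<mu>))\<^sup>2"
    if \<mu>: "\<mu> \<in> popX S U m" and x: "slow_part \<mu> \<in> Dbar" for R \<mu>
  proof -
    define x d n where "x = slow_part \<mu>" and "d = infdist (slow_part \<mu>) MF" and "n = norm (fast_part \<mu>)"
    define e where "e = slow_part (Efield S U phi R F rho \<mu>) - gred S U phi F rho x"
    have "V' x (slow_part (Efield S U phi R F rho \<mu>)) = V' x (gred S U phi F rho x) + V' x e"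
      by (simp add: e_def blinfun.diff_right)
    also have "V' x e \<le> norm (V' x) * norm e"
      using norm_blinfun[of "V' x" e] by simp
    also have "\<dots> \<le> (\<gamma>2 * d) * (L * n)"
      using V_grad[OF x] L(2)[OF \<mu>, of R] \<gamma>2_pos infdist_nonneg[of x MF]
      by (intro mult_mono) (simp_all add: d_def e_def n_def x_def)
    also have "\<dots> \<le> (\<gamma>1 / 2) * d\<^sup>2 + c * n\<^sup>2"
      using two_mult_le_weighted_squares[of "\<gamma>1 / 2" d "\<gamma>2 * L * n / 2"] \<gamma>1_pos
      by (simp add: c_def power2_eq_square field_simps)
    finally show ?thesis
      using V_decr[OF x] by (simp add: x_def d_def n_def)
  qed
  moreover have "c \<ge> 0" using \<gamma>1_pos by (simp add: c_def)
  ultimately show ?thesis by blast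
qed

lemma fast_part_revision_field_outside:
  "\<not> (s \<in> S c \<and> u \<in> U c) \<Longrightarrow> fast_part (revision_field \<mu>) $ (c, s, u) = 0"
  by (auto simp: fast_part_nth revision_field_def)

lemma fast_forcing_sq_le:
  "\<exists>K\<ge>0. \<forall>\<mu>\<in>popX S U m. (norm (fast_part (revision_field \<mu>)))\<^sup>2
     \<le> K * ((norm (fast_part \<mu>))\<^sup>2 + (infdist (slow_part \<mu>) MF)\<^sup>2)"
proof -
  obtain L where L: "L \<ge> 0" "\<And>\<mu>. \<mu> \<in> popX S U m \<Longrightarrow> norm (fast_part (revision_field \<mu>)) \<le> L * infdist \<mu> M"
    using fast_forcing_bound by blast
  obtain B where B: "B \<ge> 0" "\<And>\<mu>. \<mu> \<in> popX S U m \<Longrightarrow>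
      infdist \<mu> M \<le> norm (fast_part \<mu>) + B * infdist (slow_part \<mu>) MF"
    using infdist_M_le by blast
  have "(norm (fast_part (revision_field \<mu>)))\<^sup>2
      \<le> 2 * L\<^sup>2 * (1 + B\<^sup>2) * ((norm (fast_part \<mu>))\<^sup>2 + (infdist (slow_part \<mu>) MF)\<^sup>2)"
    if \<mu>: "\<mu> \<in> popX S U m" for \<mu>
  proof -
    define n d where "n = norm (fast_part \<mu>)" and "d = infdist (slow_part \<mu>) MF"
    have "norm (fast_part (revision_field \<mu>)) \<le> L * (n + B * d)"
      using L(2)[OF \<mu>] mult_left_mono[OF B(2)[OF \<mu>] L(1)] by (simp add: n_def d_def)
    then have h: "(norm (fast_part (revision_field \<mu>)))\<^sup>2 \<le> L\<^sup>2 * (n + B * d)\<^sup>2"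
      by (simp add: power_mono flip: power_mult_distrib)
    have "(n + B * d)\<^sup>2 \<le> 2 * (1 + B\<^sup>2) * (n\<^sup>2 + d\<^sup>2)"
    proof -
      have "(n + B * d)\<^sup>2 = n\<^sup>2 + B\<^sup>2 * d\<^sup>2 + 2 * n * (B * d)"
        by (simp add: power2_sum power_mult_distrib)
      moreover have "2 * (1 + B\<^sup>2) * (n\<^sup>2 + d\<^sup>2) = 2 * n\<^sup>2 + 2 * d\<^sup>2 + 2 * B\<^sup>2 * n\<^sup>2 + 2 * B\<^sup>2 * d\<^sup>2"
        by (simp add: algebra_simps)
      moreover have "2 * n * (B * d) \<le> n\<^sup>2 + B\<^sup>2 * d\<^sup>2"
        using two_mult_le_weighted_squares[of 1 n "B * d"] by (simp add: power_mult_distrib)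
      moreover have "0 \<le> d\<^sup>2" "0 \<le> B\<^sup>2 * n\<^sup>2" by simp_all
      ultimately show ?thesis by linarith
    qed
    with h have "(norm (fast_part (revision_field \<mu>)))\<^sup>2 \<le> L\<^sup>2 * (2 * (1 + B\<^sup>2) * (n\<^sup>2 + d\<^sup>2))"
      by (meson mult_left_mono order_trans zero_le_power2)
    then show ?thesis by (simp add: n_def d_def algebra_simps)
  qed
  then show ?thesis by (intro exI[of _ "2 * L\<^sup>2 * (1 + B\<^sup>2)"]) auto
qed

text \<open>The weight \<eta> trades the forcing against the decay of the fast energy; it is chosen
  so that the part of the forcing that is of order d = dist(x, MF) takes at most a quarter
  of the slow decay provided by (ii).\<close>

lemma fast_forcing_absorbed:
  "\<exists>\<eta>>0. \<exists>K. \<forall>\<mu>\<in>popX S U m.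
     energy_const * (supp_sq (fast_part (revision_field \<mu>)) / \<eta>)
       \<le> K * (norm (fast_part \<mu>))\<^sup>2 + (\<gamma>1 / 4) * (infdist (slow_part \<mu>) MF)\<^sup>2"
proof -
  obtain K where K: "K \<ge> 0" "\<And>\<mu>. \<mu> \<in> popX S U m \<Longrightarrow> (norm (fast_part (revision_field \<mu>)))\<^sup>2
      \<le> K * ((norm (fast_part \<mu>))\<^sup>2 + (infdist (slow_part \<mu>) MF)\<^sup>2)"
    using fast_forcing_sq_le by blast
  define P where "P = energy_const"
  define \<eta> where "\<eta> = 4 * P * K / \<gamma>1 + 1"
  have P: "P > 0" using energy_const_pos by (simp add: P_def)
  have \<eta>: "\<eta> \<ge> 1" using P K(1) \<gamma>1_pos by (simp add: \<eta>_def)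
  have "P * (supp_sq (fast_part (revision_field \<mu>)) / \<eta>)
      \<le> P * K * (norm (fast_part \<mu>))\<^sup>2 + (\<gamma>1 / 4) * (infdist (slow_part \<mu>) MF)\<^sup>2"
    if \<mu>: "\<mu> \<in> popX S U m" for \<mu>
  proof -
    define n d h where "n = norm (fast_part \<mu>)" and "d = infdist (slow_part \<mu>) MF"
      and "h = fast_part (revision_field \<mu>)"
    have "supp_sq h = (norm h)\<^sup>2"
      unfolding h_def by (rule power2_norm_eq_supp_sq[symmetric]) (rule fast_part_revision_field_outside)
    then have "supp_sq h \<le> K * (n\<^sup>2 + d\<^sup>2)" using K(2)[OF \<mu>] by (simp add: h_def n_def d_def)
    then have "P * (supp_sq h / \<eta>) \<le> P * (K * (n\<^sup>2 + d\<^sup>2) / \<eta>)"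
      using P \<eta> by (intro mult_left_mono divide_right_mono) auto
    also have "\<dots> = (P * K / \<eta>) * n\<^sup>2 + (P * K / \<eta>) * d\<^sup>2"
      by (simp add: add_divide_distrib algebra_simps)
    also have "\<dots> \<le> P * K * n\<^sup>2 + (\<gamma>1 / 4) * d\<^sup>2"
    proof (intro add_mono mult_right_mono)
      show "P * K / \<eta> \<le> P * K"
        using mult_left_mono[OF \<eta>, of "P * K"] P K(1) \<eta> by (simp add: divide_le_eq)
      have "P * K \<le> \<gamma>1 / 4 * \<eta>" using \<gamma>1_pos by (simp add: \<eta>_def field_simps)
      then show "P * K / \<eta> \<le> \<gamma>1 / 4" using \<eta> by (simp add: pos_divide_le_eq)
    qed simp_all
    finally show ?thesis by (simp add: n_def d_def h_def)
  qed
  moreover have "\<eta> > 0" using \<eta> by simp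
  ultimately show ?thesis unfolding P_def by blast
qed

lemma fast_lyap_deriv_le:
  "\<exists>K. \<forall>R r. r \<ge> 0 \<longrightarrow> (\<forall>c. R c \<ge> r) \<longrightarrow> (\<forall>\<mu>\<in>popX S U m.
     fast_energy_deriv (fast_part \<mu>) (fast_part (Efield S U phi R F rho \<mu>))
       \<le> (K - (3/2) * r) * (norm (fast_part \<mu>))\<^sup>2 + (\<gamma>1 / 4) * (infdist (slow_part \<mu>) MF)\<^sup>2)"
proof -
  obtain \<eta> K where \<eta>: "\<eta> > 0" and K: "\<And>\<mu>. \<mu> \<in> popX S U m \<Longrightarrow>
      energy_const * (supp_sq (fast_part (revision_field \<mu>)) / \<eta>)
        \<le> K * (norm (fast_part \<mu>))\<^sup>2 + (\<gamma>1 / 4) * (infdist (slow_part \<mu>) MF)\<^sup>2"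
    using fast_forcing_absorbed by blast
  have key: "fast_energy_deriv (fast_part \<mu>) (fast_part (Efield S U phi R F rho \<mu>))
      \<le> (energy_const * \<eta> + K - (3/2) * r) * (norm (fast_part \<mu>))\<^sup>2
        + (\<gamma>1 / 4) * (infdist (slow_part \<mu>) MF)\<^sup>2"
    if r: "r \<ge> 0" "\<And>c. R c \<ge> r" and \<mu>: "\<mu> \<in> popX S U m" for R r \<mu>
  proof -
    have "fast_energy_deriv (fast_part \<mu>) (fast_part (Efield S U phi R F rho \<mu>))
        \<le> - (3/2) * r * supp_sq (fast_part \<mu>)
          + energy_const * (\<eta> * supp_sq (fast_part \<mu>) + supp_sq (fast_part (revision_field \<mu>)) / \<eta>)"
      unfolding fast_part_Efield using \<eta> by (intro fast_energy_deriv_le r sum_fast_part) auto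
    then show ?thesis
      using K[OF \<mu>] power2_norm_fast_part[OF \<mu>] by (simp add: algebra_simps)
  qed
  show ?thesis by (intro exI[of _ "energy_const * \<eta> + K"] allI impI ballI key) auto
qed

lemma lyap_deriv_le:
  "\<exists>K. \<forall>R r. r \<ge> 0 \<longrightarrow> (\<forall>c. R c \<ge> r) \<longrightarrow> (\<forall>\<mu>\<in>popX S U m. slow_part \<mu> \<in> Dbar \<longrightarrow>
     lyap_deriv R \<mu> \<le> - (\<gamma>1 / 4) * (infdist (slow_part \<mu>) MF)\<^sup>2 + (K - (3/2) * r) * (norm (fast_part \<mu>))\<^sup>2)"
proof -
  obtain c where c: "\<forall>R. \<forall>\<mu>\<in>popX S U m. slow_part \<mu> \<in> Dbar \<longrightarrow>
      V' (slow_part \<mu>) (slow_part (Efield S U phi R F rho \<mu>))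
        \<le> - (\<gamma>1 / 2) * (infdist (slow_part \<mu>) MF)\<^sup>2 + c * (norm (fast_part \<mu>))\<^sup>2"
    using slow_lyap_deriv_le by blast
  obtain K where K: "\<forall>R r. r \<ge> 0 \<longrightarrow> (\<forall>c. R c \<ge> r) \<longrightarrow> (\<forall>\<mu>\<in>popX S U m.
      fast_energy_deriv (fast_part \<mu>) (fast_part (Efield S U phi R F rho \<mu>))
        \<le> (K - (3/2) * r) * (norm (fast_part \<mu>))\<^sup>2 + (\<gamma>1 / 4) * (infdist (slow_part \<mu>) MF)\<^sup>2)"
    using fast_lyap_deriv_le by blast
  have key: "lyap_deriv R \<mu> \<le> - (\<gamma>1 / 4) * (infdist (slow_part \<mu>) MF)\<^sup>2
      + (c + K - (3/2) * r) * (norm (fast_part \<mu>))\<^sup>2"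
    if "r \<ge> 0" "\<forall>c. R c \<ge> r" "\<mu> \<in> popX S U m" "slow_part \<mu> \<in> Dbar" for R r \<mu>
  proof -
    have "lyap_deriv R \<mu> \<le> - (\<gamma>1 / 2) * (infdist (slow_part \<mu>) MF)\<^sup>2 + c * (norm (fast_part \<mu>))\<^sup>2
        + ((K - (3/2) * r) * (norm (fast_part \<mu>))\<^sup>2 + (\<gamma>1 / 4) * (infdist (slow_part \<mu>) MF)\<^sup>2)"
      unfolding lyap_deriv_def using c K that by (intro add_mono) auto
    then show ?thesis by (simp add: algebra_simps)
  qed
  show ?thesis by (intro exI[of _ "c + K"] allI impI ballI key) auto
qed

definition admissible_radius :: "real \<Rightarrow> bool" where
  "admissible_radius r \<longleftrightarrow> r > 0 \<and> (\<forall>y\<in>Dx U m. infdist y MF \<le> r \<longrightarrow> y \<in> Dbar)"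

lemma admissible_radius_exists: "\<exists>r. admissible_radius r"
proof -
  obtain W where W: "open W" "MF \<subseteq> W" "W \<inter> Dx U m \<subseteq> Dbar" using Dbar_nbhd by blast
  obtain \<delta> where \<delta>: "\<delta> > 0" "\<And>x y. x \<in> MF \<Longrightarrow> y \<in> - W \<Longrightarrow> \<delta> \<le> dist x y"
    using separate_compact_closed[OF compact_MF, of "- W"] W by blast
  have "y \<in> Dbar" if y: "y \<in> Dx U m" "infdist y MF \<le> \<delta> / 2" for y
  proof -
    obtain x where x: "x \<in> MF" "infdist y MF = dist y x" by (rule nearest_in_MF)
    have "y \<in> W"
    proof (rule ccontr)
      assume "y \<notin> W"
      then have "\<delta> \<le> dist y x" using \<delta>(2)[OF x(1), of y] by (simp add: dist_commute)
      then show False using x(2) y(2) \<delta>(1) by linarith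
    qed
    then show ?thesis using W y by auto
  qed
  then have "admissible_radius (\<delta> / 2)" using \<delta> by (simp add: admissible_radius_def)
  then show ?thesis by blast
qed

lemma admissible_radius_global:
  assumes "Dbar = Dx U m"
  shows "\<exists>r. admissible_radius r \<and> (\<forall>x\<in>Dx U m. infdist x MF \<le> r)"
proof -
  obtain b where b: "\<And>x. x \<in> Dx U m \<Longrightarrow> norm x \<le> b"
    using compact_imp_bounded[OF compact_Dx] by (auto simp: bounded_iff)
  obtain x0 where x0: "x0 \<in> MF" using MF_ne by auto
  have "infdist x MF \<le> 2 * b + 1" if "x \<in> Dx U m" for x
  proof -
    have "infdist x MF \<le> dist x x0" using x0 by (rule infdist_le)
    also have "\<dots> \<le> norm x + norm x0" by (simp add: dist_norm norm_triangle_ineq4)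
    finally show ?thesis using b[OF that] b[of x0] x0 MF_Dx by auto
  qed
  moreover have "x0 \<in> Dx U m" using x0 MF_Dx by auto
  then have "0 < 2 * b + 1" using b[of x0] norm_ge_zero[of x0] by linarith
  ultimately have "admissible_radius (2 * b + 1) \<and> (\<forall>x\<in>Dx U m. infdist x MF \<le> 2 * b + 1)"
    unfolding admissible_radius_def using assms by simp
  then show ?thesis by blast
qed

lemma V_le_quadratic:
  assumes r: "admissible_radius r" and x: "x \<in> Dx U m" and dx: "infdist x MF \<le> r"
  shows "V x \<le> \<gamma>2 * (infdist x MF)\<^sup>2"
proof -
  obtain y where y: "y \<in> MF" "infdist x MF = dist x y" by (rule nearest_in_MF)
  let ?T = "closed_segment y x"
  have dT: "infdist z MF \<le> infdist x MF" if "z \<in> ?T" for z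
    using infdist_le[OF y(1), of z] dist_in_closed_segment[OF that] y(2)
    by (metis dist_commute order_trans)
  have TD: "?T \<subseteq> Dbar"
    using closed_segment_subset[OF _ x convex_Dx, of y] y(1) MF_Dx r dT dx
    by (force simp: admissible_radius_def)
  have "norm (V x - V y) \<le> (\<gamma>2 * infdist x MF) * norm (x - y)"
  proof (rule differentiable_bound[OF convex_closed_segment])
    fix z assume z: "z \<in> ?T"
    show "(V has_derivative blinfun_apply (V' z)) (at z within ?T)"
      using V_has_derivative TD z by (blast intro: has_derivative_at_withinI)
    have "norm (V' z) \<le> \<gamma>2 * infdist z MF" using V_grad TD z by auto
    also have "\<dots> \<le> \<gamma>2 * infdist x MF" using dT[OF z] \<gamma>2_pos by (intro mult_left_mono) auto
    finally show "onorm (blinfun_apply (V' z)) \<le> \<gamma>2 * infdist x MF"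
      by (simp add: norm_blinfun.rep_eq[symmetric])
  qed auto
  then show ?thesis using V_zero[OF y(1)] y(2) by (simp add: dist_norm power2_eq_square)
qed

lemma V_lower_bound_annulus:
  assumes r: "admissible_radius r" and \<eta>: "\<eta> > 0"
  shows "\<exists>\<beta>>0. \<forall>x\<in>Dx U m. \<eta> \<le> infdist x MF \<and> infdist x MF \<le> r \<longrightarrow> \<beta> \<le> V x"
proof -
  define K where "K = {x \<in> Dx U m. \<eta> \<le> infdist x MF \<and> infdist x MF \<le> r}"
  have KD: "K \<subseteq> Dbar" using r by (auto simp: K_def admissible_radius_def)
  have "compact K"
  proof -
    have "K = Dx U m \<inter> {x. \<eta> \<le> infdist x MF} \<inter> {x. infdist x MF \<le> r}" by (auto simp: K_def)
    moreover have "closed {x. \<eta> \<le> infdist x MF}" "closed {x. infdist x MF \<le> r}"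
      by (intro closed_Collect_le continuous_intros continuous_on_infdist)+
    ultimately show ?thesis using compact_Dx by (metis compact_Int_closed)
  qed
  show ?thesis
  proof (cases "K = {}")
    case False
    have "continuous_on K V"
      using V_has_derivative KD
      by (intro has_derivative_continuous_on) (blast intro: has_derivative_at_withinI)
    then obtain x0 where x0: "x0 \<in> K" "\<And>y. y \<in> K \<Longrightarrow> V x0 \<le> V y"
      using continuous_attains_inf[OF \<open>compact K\<close> False] by blast
    have "x0 \<notin> MF" using x0(1) \<eta> by (auto simp: K_def)
    then have "V x0 > 0" using V_pos x0(1) KD by auto
    then show ?thesis using x0 by (auto simp: K_def)
  qed (auto simp: K_def intro: exI[of _ 1])
qed

lemma lyap_bounds:
  assumes r: "admissible_radius r" and \<mu>: "\<mu> \<in> popX S U m" and d: "infdist (slow_part \<mu>) MF \<le> r"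
  shows "(norm (fast_part \<mu>))\<^sup>2 \<le> lyap \<mu>" "V (slow_part \<mu>) \<le> lyap \<mu>"
    and "lyap \<mu> \<le> \<gamma>2 * (infdist (slow_part \<mu>) MF)\<^sup>2 + energy_const * (norm (fast_part \<mu>))\<^sup>2"
proof -
  have "slow_part \<mu> \<in> Dbar"
    using r slow_part_mem_Dx[OF \<mu>] d by (simp add: admissible_radius_def)
  then show "(norm (fast_part \<mu>))\<^sup>2 \<le> lyap \<mu>" "V (slow_part \<mu>) \<le> lyap \<mu>"
    using supp_sq_le_fast_energy[of "fast_part \<mu>"] power2_norm_fast_part[OF \<mu>] V_nonneg[of "slow_part \<mu>"]
      fast_energy_nonneg[of "fast_part \<mu>"]
    by (auto simp: lyap_def)
  show "lyap \<mu> \<le> \<gamma>2 * (infdist (slow_part \<mu>) MF)\<^sup>2 + energy_const * (norm (fast_part \<mu>))\<^sup>2"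
    using V_le_quadratic[OF r slow_part_mem_Dx[OF \<mu>] d] fast_energy_le[of "fast_part \<mu>"]
      power2_norm_fast_part[OF \<mu>]
    by (simp add: lyap_def add_mono)
qed

definition dissipative :: "('c \<Rightarrow> real) \<Rightarrow> bool" where
  "dissipative R \<longleftrightarrow> (\<forall>\<mu>\<in>popX S U m. slow_part \<mu> \<in> Dbar \<longrightarrow>
     lyap_deriv R \<mu> \<le> - (\<gamma>1 / 4) * (infdist (slow_part \<mu>) MF)\<^sup>2 - (norm (fast_part \<mu>))\<^sup>2)"

lemma dissipative_if_fast: "\<exists>r0>0. \<forall>R. (\<forall>c. R c \<ge> r0) \<longrightarrow> dissipative R"
proof -
  obtain K where K: "\<And>R r \<mu>. r \<ge> 0 \<Longrightarrow> (\<forall>c. R c \<ge> r) \<Longrightarrow> \<mu> \<in> popX S U m \<Longrightarrow> slow_part \<mu> \<in> Dbar \<Longrightarrow>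
      lyap_deriv R \<mu> \<le> - (\<gamma>1 / 4) * (infdist (slow_part \<mu>) MF)\<^sup>2 + (K - (3/2) * r) * (norm (fast_part \<mu>))\<^sup>2"
    using lyap_deriv_le by blast
  define r0 where "r0 = 2 * (\<bar>K\<bar> + 1) / 3"
  have "dissipative R" if "\<forall>c. R c \<ge> r0" for R
    unfolding dissipative_def
  proof (intro ballI impI)
    fix \<mu> assume "\<mu> \<in> popX S U m" "slow_part \<mu> \<in> Dbar"
    moreover have "(3/2) * r0 = \<bar>K\<bar> + 1" by (simp add: r0_def)
    then have "K - (3/2) * r0 \<le> -1" using abs_ge_self[of K] by linarith
    ultimately show "lyap_deriv R \<mu> \<le> - (\<gamma>1 / 4) * (infdist (slow_part \<mu>) MF)\<^sup>2 - (norm (fast_part \<mu>))\<^sup>2"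
      using K[of r0 R \<mu>] that mult_right_mono[of "K - (3/2) * r0" "-1" "(norm (fast_part \<mu>))\<^sup>2"]
      by (simp add: r0_def)
  qed
  moreover have "r0 > 0" by (simp add: r0_def)
  ultimately show ?thesis by blast
qed

definition decay_rate :: real where
  "decay_rate = min (\<gamma>1 / (4 * \<gamma>2)) (1 / energy_const)"

lemma decay_rate_pos: "decay_rate > 0"
  using \<gamma>1_pos \<gamma>2_pos energy_const_pos by (simp add: decay_rate_def)

lemma lyap_deriv_le_decay:
  assumes R: "dissipative R" and r: "admissible_radius r"
    and \<mu>: "\<mu> \<in> popX S U m" and d: "infdist (slow_part \<mu>) MF \<le> r"
  shows "lyap_deriv R \<mu> \<le> - decay_rate * lyap \<mu>"
proof -
  define D N where "D = (infdist (slow_part \<mu>) MF)\<^sup>2" and "N = (norm (fast_part \<mu>))\<^sup>2"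
  have "decay_rate * \<gamma>2 \<le> \<gamma>1 / 4"
    using \<gamma>2_pos by (simp add: decay_rate_def min_def field_simps)
  moreover have "decay_rate * energy_const \<le> 1"
    using energy_const_pos by (simp add: decay_rate_def min_def field_simps)
  moreover have "D \<ge> 0" "N \<ge> 0" by (simp_all add: D_def N_def)
  ultimately have "(decay_rate * \<gamma>2) * D + (decay_rate * energy_const) * N \<le> \<gamma>1 / 4 * D + 1 * N"
    by (intro add_mono mult_right_mono)
  then have "decay_rate * (\<gamma>2 * D + energy_const * N) \<le> \<gamma>1 / 4 * D + N"
    by (simp add: algebra_simps)
  moreover have "decay_rate * lyap \<mu> \<le> decay_rate * (\<gamma>2 * D + energy_const * N)"
    using lyap_bounds(3)[OF r \<mu> d] decay_rate_pos by (simp add: D_def N_def)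
  moreover have "slow_part \<mu> \<in> Dbar"
    using r slow_part_mem_Dx[OF \<mu>] d by (simp add: admissible_radius_def)
  then have "lyap_deriv R \<mu> \<le> - (\<gamma>1 / 4) * D - N"
    using R \<mu> by (simp add: dissipative_def D_def N_def)
  ultimately show ?thesis by linarith
qed

lemma lyap_decay:
  assumes R: "dissipative R" and r: "admissible_radius r"
    and sol: "E_solution S U m phi R F rho \<mu>0 traj" and T: "T \<ge> 0"
    and stay: "\<And>\<tau>. 0 \<le> \<tau> \<Longrightarrow> \<tau> \<le> T \<Longrightarrow> infdist (slow_part (traj \<tau>)) MF \<le> r"
  shows "lyap (traj T) \<le> lyap \<mu>0 * exp (- decay_rate * T)"
proof -
  define f where "f \<tau> = lyap (traj \<tau>) * exp (decay_rate * \<tau>)" for \<tau>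
  have "f T \<le> f 0"
  proof (rule nonpos_derivative_imp_le_initial[OF T])
    fix \<tau> :: real assume \<tau>: "0 \<le> \<tau>" "\<tau> \<le> T"
    have \<mu>: "traj \<tau> \<in> popX S U m" using sol \<tau> by (simp add: E_solution_def)
    have "slow_part (traj \<tau>) \<in> Dbar"
      using r slow_part_mem_Dx[OF \<mu>] stay[OF \<tau>] by (simp add: admissible_radius_def)
    then have "((\<lambda>\<tau>. lyap (traj \<tau>)) has_real_derivative lyap_deriv R (traj \<tau>)) (at \<tau> within {0..})"
      using sol \<tau> by (intro lyap_has_derivative) (simp_all add: E_solution_def)
    then show "(f has_real_derivative
        lyap_deriv R (traj \<tau>) * exp (decay_rate * \<tau>) + lyap (traj \<tau>) * (exp (decay_rate * \<tau>) * decay_rate))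
        (at \<tau> within {0..})"
      unfolding f_def by (auto intro!: derivative_eq_intros)
    show "lyap_deriv R (traj \<tau>) * exp (decay_rate * \<tau>) + lyap (traj \<tau>) * (exp (decay_rate * \<tau>) * decay_rate) \<le> 0"
    proof -
      have "lyap_deriv R (traj \<tau>) + decay_rate * lyap (traj \<tau>) \<le> 0"
        using lyap_deriv_le_decay[OF R r \<mu> stay[OF \<tau>]] by simp
      then have "(lyap_deriv R (traj \<tau>) + decay_rate * lyap (traj \<tau>)) * exp (decay_rate * \<tau>) \<le> 0"
        by (simp add: mult_nonpos_nonneg)
      then show ?thesis by (simp add: algebra_simps)
    qed
  qed
  then have "lyap (traj T) * exp (decay_rate * T) \<le> lyap \<mu>0"
    using sol by (simp add: f_def E_solution_def)
  then show ?thesis by (simp add: exp_minus field_simps)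
qed

lemma E_solution_popX: "E_solution S U m phi R F rho \<mu>0 traj \<Longrightarrow> t \<ge> 0 \<Longrightarrow> traj t \<in> popX S U m"
  by (simp add: E_solution_def)

lemma continuous_on_slow_dist:
  assumes "E_solution S U m phi R F rho \<mu>0 traj"
  shows "continuous_on {0..} (\<lambda>t. infdist (slow_part (traj t)) MF)"
proof -
  have "continuous_on {0..} traj"
    using assms by (intro continuous_on_vector_derivative) (auto simp: E_solution_def)
  then show ?thesis
    by (intro continuous_on_infdist continuous_on_compose2[OF
          linear_continuous_on[OF bounded_linear_slow_part]]) auto
qed

text \<open>A solution can leave the ball of radius r/2 around the slow equilibria only through
  the annulus where V, hence the non-increasing Lyapunov function, is at least \<beta>.\<close>

lemma trajectory_trapped:
  assumes R: "dissipative R" and r: "admissible_radius r"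
    and \<beta>: "\<And>x. x \<in> Dx U m \<Longrightarrow> r / 2 \<le> infdist x MF \<Longrightarrow> infdist x MF \<le> r \<Longrightarrow> \<beta> \<le> V x"
    and sol: "E_solution S U m phi R F rho \<mu>0 traj"
    and d0: "infdist (slow_part \<mu>0) MF < r / 2" and W0: "lyap \<mu>0 < \<beta>"
  shows "\<forall>t\<ge>0. infdist (slow_part (traj t)) MF < r / 2"
proof (rule ccontr)
  have \<mu>0: "\<mu>0 \<in> popX S U m" "traj 0 = \<mu>0" using sol by (auto simp: E_solution_def)
  assume "\<not> (\<forall>t\<ge>0. infdist (slow_part (traj t)) MF < r / 2)"
  then obtain t1 where t1: "0 \<le> t1" "r / 2 \<le> infdist (slow_part (traj t1)) MF"
    and stay: "\<And>\<tau>. 0 \<le> \<tau> \<Longrightarrow> \<tau> \<le> t1 \<Longrightarrow> infdist (slow_part (traj \<tau>)) MF \<le> r / 2"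
    using first_crossing[OF continuous_on_slow_dist[OF sol], of "r / 2"] d0 \<mu>0(2) by (auto simp: not_less)
  have r2: "r / 2 \<le> r" using r by (simp add: admissible_radius_def)
  have \<mu>1: "traj t1 \<in> popX S U m" by (rule E_solution_popX[OF sol t1(1)])
  have "lyap (traj t1) \<le> lyap \<mu>0 * exp (- decay_rate * t1)"
    using stay r2 by (intro lyap_decay[OF R r sol t1(1)]) force
  also have "\<dots> \<le> lyap \<mu>0"
    using lyap_bounds(1)[OF r \<mu>0(1)] d0 r2 decay_rate_pos t1(1)
    by (intro mult_left_le) (auto intro: order_trans[OF zero_le_power2])
  also have "\<dots> < \<beta>" by (rule W0)
  also have "\<beta> \<le> V (slow_part (traj t1))"
    using \<beta> slow_part_mem_Dx[OF \<mu>1] t1 stay[of t1] r2 by force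
  also have "\<dots> \<le> lyap (traj t1)"
    using lyap_bounds(2)[OF r \<mu>1] stay[of t1] t1 r2 by simp
  finally show False by simp
qed

lemma close_if_lyap_small:
  assumes r: "admissible_radius r" and e: "e > 0"
  shows "\<exists>w>0. \<forall>\<mu>\<in>popX S U m. infdist (slow_part \<mu>) MF \<le> r \<longrightarrow> lyap \<mu> < w \<longrightarrow> infdist \<mu> M < e"
proof -
  obtain B where B: "B \<ge> 0" "\<And>\<mu>. \<mu> \<in> popX S U m \<Longrightarrow>
      infdist \<mu> M \<le> norm (fast_part \<mu>) + B * infdist (slow_part \<mu>) MF"
    using infdist_M_le by blast
  define \<eta> where "\<eta> = e / (2 * (B + 1))"
  have \<eta>: "\<eta> > 0" using e B by (simp add: \<eta>_def)
  obtain \<beta> where \<beta>: "\<beta> > 0" "\<And>x. x \<in> Dx U m \<Longrightarrow> \<eta> \<le> infdist x MF \<Longrightarrow> infdist x MF \<le> r \<Longrightarrow> \<beta> \<le> V x"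
    using V_lower_bound_annulus[OF r \<eta>] by blast
  have "infdist \<mu> M < e"
    if \<mu>: "\<mu> \<in> popX S U m" and d: "infdist (slow_part \<mu>) MF \<le> r" and W: "lyap \<mu> < min \<beta> (e\<^sup>2 / 4)" for \<mu>
  proof -
    have "(norm (fast_part \<mu>))\<^sup>2 < (e / 2)\<^sup>2"
      using lyap_bounds(1)[OF r \<mu> d] W by (simp add: power_divide)
    then have n: "norm (fast_part \<mu>) < e / 2"
      using power_less_imp_less_base[of "norm (fast_part \<mu>)" 2 "e / 2"] e by simp
    have "infdist (slow_part \<mu>) MF < \<eta>"
      using \<beta>(2)[OF slow_part_mem_Dx[OF \<mu>] _ d] lyap_bounds(2)[OF r \<mu> d] W by force
    then have "B * infdist (slow_part \<mu>) MF \<le> B * \<eta>" using B(1) by (simp add: mult_left_mono)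
    also have "B * \<eta> < e / 2" using e B(1) by (simp add: \<eta>_def field_simps)
    finally show ?thesis using B(2)[OF \<mu>] n by linarith
  qed
  moreover have "min \<beta> (e\<^sup>2 / 4) > 0" using \<beta> e by simp
  ultimately show ?thesis by blast
qed

lemma lyap_small_near_M:
  assumes r: "admissible_radius r" and w: "w > 0"
  shows "\<exists>\<delta>>0. \<forall>\<mu>\<in>popX S U m. infdist \<mu> M < \<delta> \<longrightarrow> infdist (slow_part \<mu>) MF < r / 2 \<and> lyap \<mu> < w"
proof -
  obtain C where C: "C > 0" "\<And>\<mu>. infdist (slow_part \<mu>) MF \<le> C * infdist \<mu> M"
    "\<And>\<mu>. norm (fast_part \<mu>) \<le> C * infdist \<mu> M"
    using slow_fast_le_infdist_M by blast
  define Q where "Q = (\<gamma>2 + energy_const) * C\<^sup>2"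
  define \<delta> where "\<delta> = min 1 (min (r / (2 * C)) (w / (Q + 1)))"
  have Q: "Q \<ge> 0" using \<gamma>2_pos energy_const_pos by (simp add: Q_def)
  have \<delta>: "\<delta> > 0" using r w Q C(1) by (simp add: \<delta>_def admissible_radius_def)
  have "infdist (slow_part \<mu>) MF < r / 2 \<and> lyap \<mu> < w"
    if \<mu>: "\<mu> \<in> popX S U m" and dM: "infdist \<mu> M < \<delta>" for \<mu>
  proof -
    define D where "D = infdist \<mu> M"
    have D: "0 \<le> D" "D < 1" "D < r / (2 * C)" "D < w / (Q + 1)"
      using dM by (auto simp: D_def \<delta>_def infdist_nonneg)
    have "infdist (slow_part \<mu>) MF \<le> C * D" using C(2) by (simp add: D_def)
    also have "\<dots> < r / 2" using D(3) C(1) by (simp add: field_simps)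
    finally have slow: "infdist (slow_part \<mu>) MF < r / 2" .
    have "(norm (fast_part \<mu>))\<^sup>2 \<le> C\<^sup>2 * D\<^sup>2"
      using power_mono[OF C(3)[of \<mu>] norm_ge_zero, of 2] by (simp add: D_def power_mult_distrib)
    moreover have "(infdist (slow_part \<mu>) MF)\<^sup>2 \<le> C\<^sup>2 * D\<^sup>2"
      using power_mono[OF C(2)[of \<mu>] infdist_nonneg, of 2] by (simp add: D_def power_mult_distrib)
    ultimately have "\<gamma>2 * (infdist (slow_part \<mu>) MF)\<^sup>2 + energy_const * (norm (fast_part \<mu>))\<^sup>2
        \<le> \<gamma>2 * (C\<^sup>2 * D\<^sup>2) + energy_const * (C\<^sup>2 * D\<^sup>2)"
      using \<gamma>2_pos energy_const_pos by (intro add_mono mult_left_mono) auto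
    then have "lyap \<mu> \<le> Q * D\<^sup>2"
      using lyap_bounds(3)[OF r \<mu>] slow r by (simp add: Q_def algebra_simps admissible_radius_def)
    also have "\<dots> \<le> Q * D" using D Q by (simp add: power2_eq_square mult_left_le mult_left_mono)
    also have "\<dots> \<le> (Q + 1) * D" using D(1) by (simp add: algebra_simps)
    also have "\<dots> < w" using D(4) Q by (simp add: field_simps)
    finally show ?thesis using slow by blast
  qed
  then show ?thesis using \<delta> by blast
qed

lemma infdist_M_tendsto_0:
  assumes R: "dissipative R" and r: "admissible_radius r"
    and sol: "E_solution S U m phi R F rho \<mu>0 traj"
    and stay: "\<And>t. t \<ge> 0 \<Longrightarrow> infdist (slow_part (traj t)) MF \<le> r"
  shows "((\<lambda>t. infdist (traj t) M) \<longlongrightarrow> 0) at_top"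
proof (rule tendstoI)
  fix e :: real assume "e > 0"
  then obtain w where w: "w > 0"
    "\<And>\<mu>. \<mu> \<in> popX S U m \<Longrightarrow> infdist (slow_part \<mu>) MF \<le> r \<Longrightarrow> lyap \<mu> < w \<Longrightarrow> infdist \<mu> M < e"
    using close_if_lyap_small[OF r] by blast
  have "((\<lambda>t. lyap \<mu>0 * exp (- decay_rate * t)) \<longlongrightarrow> lyap \<mu>0 * 0) at_top"
  proof (intro tendsto_mult tendsto_const)
    have "filterlim (\<lambda>t. - decay_rate * t) at_bot at_top"
      using decay_rate_pos by (intro filterlim_tendsto_neg_mult_at_bot[OF tendsto_const] filterlim_ident) auto
    then show "((\<lambda>t. exp (- decay_rate * t)) \<longlongrightarrow> 0) at_top"
      by (rule filterlim_compose[OF exp_at_bot])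
  qed
  then have "\<forall>\<^sub>F t in at_top. lyap \<mu>0 * exp (- decay_rate * t) < w"
    using w(1) by (auto dest: order_tendstoD)
  moreover have "\<forall>\<^sub>F t in at_top. t \<ge> (0::real)" by (rule eventually_ge_at_top)
  ultimately show "\<forall>\<^sub>F t in at_top. dist (infdist (traj t) M) 0 < e"
  proof eventually_elim
    case (elim t)
    then have "lyap (traj t) < w"
      using lyap_decay[OF R r sol elim(2) stay] by simp
    then show ?case
      using w(2)[OF E_solution_popX[OF sol elim(2)] stay[OF elim(2)]] by (simp add: infdist_nonneg)
  qed
qed

lemma lyap_stays_small:
  assumes R: "dissipative R" and r: "admissible_radius r" and w: "w > 0"
  shows "\<exists>\<delta>>0. \<forall>\<mu>0\<in>popX S U m. \<forall>traj. infdist \<mu>0 M < \<delta> \<and> E_solution S U m phi R F rho \<mu>0 traj \<longrightarrow>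
      (\<forall>t\<ge>0. infdist (slow_part (traj t)) MF \<le> r \<and> lyap (traj t) < w)"
proof -
  have "r / 2 > 0" using r by (simp add: admissible_radius_def)
  then obtain \<beta> where \<beta>: "\<beta> > 0"
    "\<And>x. x \<in> Dx U m \<Longrightarrow> r / 2 \<le> infdist x MF \<Longrightarrow> infdist x MF \<le> r \<Longrightarrow> \<beta> \<le> V x"
    using V_lower_bound_annulus[OF r] by blast
  obtain \<delta> where \<delta>: "\<delta> > 0" "\<And>\<mu>. \<mu> \<in> popX S U m \<Longrightarrow> infdist \<mu> M < \<delta> \<Longrightarrow>
      infdist (slow_part \<mu>) MF < r / 2 \<and> lyap \<mu> < min w \<beta>"
    using lyap_small_near_M[OF r, of "min w \<beta>"] \<beta>(1) w by auto
  have "infdist (slow_part (traj t)) MF \<le> r \<and> lyap (traj t) < w"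
    if \<mu>0: "\<mu>0 \<in> popX S U m" "infdist \<mu>0 M < \<delta>" and sol: "E_solution S U m phi R F rho \<mu>0 traj"
      and t: "t \<ge> 0" for \<mu>0 traj t
  proof -
    have near: "infdist (slow_part \<mu>0) MF < r / 2" "lyap \<mu>0 < min w \<beta>" using \<delta>(2)[OF \<mu>0] by auto
    have "\<forall>\<tau>\<ge>0. infdist (slow_part (traj \<tau>)) MF < r / 2"
      by (rule trajectory_trapped[OF R r _ sol near(1)]) (use \<beta>(2) near(2) in auto)
    then have stay: "infdist (slow_part (traj \<tau>)) MF \<le> r" if "\<tau> \<ge> 0" for \<tau>
      using that r by (fastforce simp: admissible_radius_def)
    have "lyap (traj t) \<le> lyap \<mu>0 * exp (- decay_rate * t)"
      using lyap_decay[OF R r sol t stay] by simp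
    also have "\<dots> \<le> lyap \<mu>0"
      using lyap_bounds(1)[OF r \<mu>0(1)] near(1) decay_rate_pos t r
      by (intro mult_left_le) (auto simp: admissible_radius_def intro: order_trans[OF zero_le_power2])
    finally show ?thesis using near(2) stay[OF t] by simp
  qed
  then show ?thesis using \<delta>(1) by blast
qed

theorem E_LAS_if_dissipative:
  assumes R: "dissipative R"
  shows "E_LAS S U m phi R F rho M"
proof -
  obtain r where r: "admissible_radius r" using admissible_radius_exists by blast
  have "\<exists>\<delta>>0. \<forall>\<mu>0\<in>popX S U m. \<forall>traj. infdist \<mu>0 M < \<delta> \<and> E_solution S U m phi R F rho \<mu>0 traj \<longrightarrow>
      (\<forall>t\<ge>0. infdist (traj t) M < e)" if "e > 0" for e
  proof -
    obtain w where w: "w > 0"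
      "\<And>\<mu>. \<mu> \<in> popX S U m \<Longrightarrow> infdist (slow_part \<mu>) MF \<le> r \<Longrightarrow> lyap \<mu> < w \<Longrightarrow> infdist \<mu> M < e"
      using close_if_lyap_small[OF r \<open>e > 0\<close>] by blast
    show ?thesis using lyap_stays_small[OF R r w(1)] w(2) E_solution_popX by meson
  qed
  moreover have "\<exists>\<delta>>0. \<forall>\<mu>0\<in>popX S U m. \<forall>traj. infdist \<mu>0 M < \<delta> \<and> E_solution S U m phi R F rho \<mu>0 traj \<longrightarrow>
      ((\<lambda>t. infdist (traj t) M) \<longlongrightarrow> 0) at_top"
    using lyap_stays_small[OF R r, of 1] infdist_M_tendsto_0[OF R r] by fastforce
  ultimately show ?thesis unfolding E_LAS_def by blast
qed

theorem E_GAS_if_dissipative: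
  assumes R: "dissipative R" and global: "Dbar = Dx U m"
  shows "E_GAS S U m phi R F rho M"
proof -
  obtain r where r: "admissible_radius r" and all: "\<And>x. x \<in> Dx U m \<Longrightarrow> infdist x MF \<le> r"
    using admissible_radius_global[OF global] by blast
  have "((\<lambda>t. infdist (traj t) M) \<longlongrightarrow> 0) at_top" if sol: "E_solution S U m phi R F rho \<mu>0 traj" for \<mu>0 traj
    using all slow_part_mem_Dx E_solution_popX[OF sol] by (intro infdist_M_tendsto_0[OF R r sol]) blast
  then show ?thesis using E_LAS_if_dissipative[OF R] by (simp add: E_LAS_def E_GAS_def)
qed

end

theorem theorem3:
  fixes S :: "'c::finite \<Rightarrow> 's::finite set"
    and A :: "'c \<Rightarrow> 's \<Rightarrow> 'a::finite set"
    and phi :: "'c \<Rightarrow> 's \<Rightarrow> 'a \<Rightarrow> 's \<Rightarrow> real"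
    and U :: "'c \<Rightarrow> ('s \<Rightarrow> 'a) set"
    and m :: "'c \<Rightarrow> real"
    and \<kappa> :: "'c \<Rightarrow> real"
    and F :: "'c \<Rightarrow> ('c,'s,'a) pstate \<Rightarrow> ('s \<Rightarrow> 'a) \<Rightarrow> real"
    and rho :: "'c \<Rightarrow> real^('s \<Rightarrow> 'a) \<Rightarrow> real^('s \<Rightarrow> 'a) \<Rightarrow> ('s \<Rightarrow> 'a) \<Rightarrow> ('s \<Rightarrow> 'a) \<Rightarrow> real"
    and MF :: "('c,'s,'a) pdist set"
    and Dbar :: "('c,'s,'a) pdist set"
    and V :: "('c,'s,'a) pdist \<Rightarrow> real"
    and V' :: "('c,'s,'a) pdist \<Rightarrow> ('c,'s,'a) pdist \<Rightarrow>\<^sub>L real"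
    and \<gamma>1 \<gamma>2 :: real
  \<comment> \<open>the model\<close>
  assumes S_ne: "\<And>c. S c \<noteq> {}"
    and A_ne: "\<And>c s. s \<in> S c \<Longrightarrow> A c s \<noteq> {}"
    and phi_nonneg: "\<And>c s a s'. s \<in> S c \<Longrightarrow> a \<in> A c s \<Longrightarrow> s' \<in> S c \<Longrightarrow> phi c s a s' \<ge> 0"
    and phi_sum: "\<And>c s a. s \<in> S c \<Longrightarrow> a \<in> A c s \<Longrightarrow> (\<Sum>s'\<in>S c. phi c s a s') = 1"
    and U_ne: "\<And>c. U c \<noteq> {}"
    and U_pol: "\<And>c u s. u \<in> U c \<Longrightarrow> s \<in> S c \<Longrightarrow> u s \<in> A c s"
    and unichain: "\<And>c u. u \<in> U c \<Longrightarrow> unique_recurrent_class (S c) (kern phi c u)"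
    and m_pos: "\<And>c. m c > 0"
    and \<kappa>_ge: "\<And>c. \<kappa> c \<ge> 1"
    and \<kappa>_min: "\<exists>c. \<kappa> c = 1"
    and F_C1: "\<exists>G. open G \<and> popX S U m \<subseteq> G \<and> (\<forall>c. \<forall>u\<in>U c. C1_on G (\<lambda>\<mu>. F c \<mu> u))"
    and rho_nonneg: "\<And>c p q u v. (\<forall>i. q $ i \<ge> 0) \<Longrightarrow> u \<in> U c \<Longrightarrow> v \<in> U c \<Longrightarrow> rho c p q u v \<ge> 0"
    and rho_lip: "\<And>c. \<exists>L. \<forall>u\<in>U c. \<forall>v\<in>U c.
                    L-lipschitz_on {(p, q). \<forall>i. q $ i \<ge> 0} (\<lambda>(p, q). rho c p q u v)"
  \<comment> \<open>the set of equilibria\<close>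
    and MF_ne: "MF \<noteq> {}"
    and MF_closed: "closed MF"
    and MF_NE: "MF \<subseteq> NE_ss S U m phi F"
  \<comment> \<open>(i)\<close>
    and hyp_i: "\<And>\<mu> c s u. \<mu> \<in> MSNE S U m phi F \<Longrightarrow> s \<in> S c \<Longrightarrow> u \<in> U c \<Longrightarrow> fr S U F rho \<mu> c s u = 0"
  \<comment> \<open>(ii)\<close>
    and Dbar_sub: "Dbar \<subseteq> Dx U m"
    and Dbar_nbhd: "\<exists>W. open W \<and> MF \<subseteq> W \<and> W \<inter> Dx U m \<subseteq> Dbar"
    and V_C1: "\<exists>G. open G \<and> Dbar \<subseteq> G \<and>
                 (\<forall>x\<in>G. (V has_derivative blinfun_apply (V' x)) (at x)) \<and> continuous_on G V'"
    and V_nonneg: "\<And>x. x \<in> Dbar \<Longrightarrow> V x \<ge> 0"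
    and V_pos: "\<And>x. x \<in> Dbar - MF \<Longrightarrow> V x > 0"
    and V_zero: "\<And>x. x \<in> MF \<Longrightarrow> V x = 0"
    and \<gamma>_pos: "\<gamma>1 > 0" "\<gamma>2 > 0"
    and V_decr: "\<And>x. x \<in> Dbar \<Longrightarrow> V' x (gred S U phi F rho x) \<le> - \<gamma>1 * (infdist x MF)\<^sup>2"
    and V_grad: "\<And>x. x \<in> Dbar \<Longrightarrow> norm (V' x) \<le> \<gamma>2 * infdist x MF"
  shows "\<exists>\<epsilon>s>0. \<forall>\<epsilon>. 0 < \<epsilon> \<and> \<epsilon> < \<epsilon>s \<longrightarrow>
           E_LAS S U m phi (\<lambda>c. \<kappa> c / \<epsilon>) F rho (BSK S U phi ` MF) \<and>
           (Dbar = Dx U m \<longrightarrow> E_GAS S U m phi (\<lambda>c. \<kappa> c / \<epsilon>) F rho (BSK S U phi ` MF))"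
proof -
  interpret two_time_scale_model S A phi U m F rho MF Dbar V V' \<gamma>1 \<gamma>2
    by unfold_locales (fact S_ne phi_nonneg phi_sum U_ne U_pol unichain m_pos F_C1 rho_lip
        MF_ne MF_closed MF_NE hyp_i Dbar_nbhd V_C1 V_nonneg V_pos V_zero \<gamma>_pos V_decr V_grad)+
  obtain r0 where r0: "r0 > 0" "\<And>R. \<forall>c. R c \<ge> r0 \<Longrightarrow> dissipative R"
    using dissipative_if_fast by blast
  have "dissipative (\<lambda>c. \<kappa> c / \<epsilon>)" if \<epsilon>: "0 < \<epsilon>" "\<epsilon> < 1 / r0" for \<epsilon>
  proof (rule r0(2), intro allI)
    fix c
    have "r0 < 1 / \<epsilon>" using \<epsilon> r0(1) by (simp add: field_simps)
    also have "1 / \<epsilon> \<le> \<kappa> c / \<epsilon>" using \<kappa>_ge[of c] \<epsilon>(1) by (simp add: divide_right_mono)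
    finally show "r0 \<le> \<kappa> c / \<epsilon>" by simp
  qed
  then show ?thesis
    using r0(1) E_LAS_if_dissipative E_GAS_if_dissipative by (intro exI[of _ "1 / r0"]) auto
qed

end
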